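(* Let $\mathcal{U}$ be a quasitriangular Hopf algebra with universal R-matrix $\mathcal{R}$, $\mathcal{H}\subset\mathcal{U}$ a Hopf subalgebra, $\mathcal{L}$ a base algebra over $\mathcal{H}$, and $\bar{\mathcal{F}}\in\mathcal{U}\otimes\mathcal{U}\otimes\mathcal{L}$ a universal dynamical twist. Then $\bar{\mathcal{R}}:=\bar{\mathcal{F}}_{21}^{-1}\mathcal{R}\bar{\mathcal{F}}\in\mathcal{U}\otimes\mathcal{U}\otimes\mathcal{L}$ is a universal quantum dynamical R-matrix of $\mathcal{U}$ over $\mathcal{L}$.
   Context: Hopf algebras are over a commutative ring $k$ (over a field of characteristic zero), Sweedler notation $\Delta(x)=x^{(1)}\otimes x^{(2)}$; $\mathcal{R}$ satisfies $\mathcal{R}\Delta(x)=\Delta^{op}(x)\mathcal{R}$, $(\Delta\otimes\mathrm{id})\mathcal{R}=\mathcal{R}_{13}\mathcal{R}_{23}$, $(\mathrm{id}\otimes\Delta)\mathcal{R}=\mathcal{R}_{13}\mathcal{R}_{12}$. A base algebra over $\mathcal{H}$ is a left $\mathcal{H}$-module algebra and left $\mathcal{H}$-comodule algebra $\mathcal{L}$ (action $\triangleright$, coaction $\ell\mapsto\ell^{(1)}\otimes\ell^{[2]}$) with $\{x^{(1)}\triangleright\ell\}^{(1)}x^{(2)}\otimes\{x^{(1)}\triangleright\ell\}^{[2]}=x^{(1)}\ell^{(1)}\otimes x^{(2)}\triangleright\ell^{[2]}$ and $\ell_1\ell_2=(\ell_1^{(1)}\triangleright\ell_2)\ell_1^{[2]}$.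 All products are in the algebras $\mathcal{U}^{\otimes n}\otimes\mathcal{L}$; $\mathcal{R}$ is identified with $\mathcal{R}\otimes1\in\mathcal{U}\otimes\mathcal{U}\otimes\mathcal{L}$. For $X=X_1\otimes X_2\otimes X_3\in\mathcal{U}\otimes\mathcal{U}\otimes\mathcal{L}$ (summation implicit): $X_{21}=X_2\otimes X_1\otimes X_3$; in $\mathcal{U}^{\otimes3}\otimes\mathcal{L}$, $X_{12}=X_1\otimes X_2\otimes1\otimes X_3$, $X_{13}=X_1\otimes1\otimes X_2\otimes X_3$, $X_{23}=1\otimes X_1\otimes X_2\otimes X_3$, ${}^{(3)}X=X_1\otimes X_2\otimes X_3^{(1)}\otimes X_3^{[2]}$, ${}^{(2)}X=X_1\otimes X_3^{(1)}\otimes X_2\otimes X_3^{[2]}$, ${}^{(1)}X=X_3^{(1)}\otimes X_1\otimes X_2\otimes X_3^{[2]}$. A universal dynamical twist is an invertible $\bar{\mathcal{F}}$ with $h^{(1)}\bar{\mathcal{F}}_1\otimes h^{(2)}\bar{\mathcal{F}}_2\otimes h^{(3)}\triangleright\bar{\mathcal{F}}_3=\bar{\mathcal{F}}_1h^{(1)}\otimes\bar{\mathcal{F}}_2h^{(2)}\otimes\bar{\mathcal{F}}_3$ for $h\in\mathcal{H}$, $(\Delta\otimes\mathrm{id})(\bar{\mathcal{F}})\,{}^{(3)}\!\bar{\mathcal{F}}=(\mathrm{id}\otimes\Delta)(\bar{\mathcal{F}})\,\bar{\mathcal{F}}_{23}$ (with $\Delta$ applied to $\mathcal{U}$-factors),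 and $(\varepsilon\otimes\mathrm{id}\otimes\mathrm{id})(\bar{\mathcal{F}})=1\otimes1=(\mathrm{id}\otimes\varepsilon\otimes\mathrm{id})(\bar{\mathcal{F}})$. A universal quantum dynamical R-matrix over $\mathcal{L}$ is $\bar{\mathcal{R}}\in\mathcal{U}\otimes\mathcal{U}\otimes\mathcal{L}$ with $h^{(2)}\bar{\mathcal{R}}_1\otimes h^{(1)}\bar{\mathcal{R}}_2\otimes h^{(3)}\triangleright\bar{\mathcal{R}}_3=\bar{\mathcal{R}}_1h^{(1)}\otimes\bar{\mathcal{R}}_2h^{(2)}\otimes\bar{\mathcal{R}}_3$ for $h\in\mathcal{H}$ and $\bar{\mathcal{R}}_{12}\,{}^{(2)}\!\bar{\mathcal{R}}_{13}\,\bar{\mathcal{R}}_{23}={}^{(1)}\!\bar{\mathcal{R}}_{23}\,\bar{\mathcal{R}}_{13}\,{}^{(3)}\!\bar{\mathcal{R}}_{12}$ in $\mathcal{U}^{\otimes3}\otimes\mathcal{L}$, where ${}^{(i)}\!\bar{\mathcal{R}}_{jk}$ denotes ${}^{(i)}\!\bar{\mathcal{R}}$. *)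

theory Defs
  imports "HOL-Library.Poly_Mapping"
begin

text \<open>A k-vector space with basis indexed by a type 'b is modelled as the type of
finitely supported coefficient functions 'b =>0 'k.  Tensor products of such spaces are
the spaces whose basis is the product of the bases (pairs nested to the right).
Multilinear maps are determined by their values on basis vectors.\<close>

definition smul :: "'k::field \<Rightarrow> ('b \<Rightarrow>\<^sub>0 'k) \<Rightarrow> ('b \<Rightarrow>\<^sub>0 'k)" where
  "smul c x = Poly_Mapping.map (\<lambda>v. c * v) x"

definition bv :: "'b \<Rightarrow> ('b \<Rightarrow>\<^sub>0 'k::field)" where
  "bv b = Poly_Mapping.single b 1"

definition lin :: "('a \<Rightarrow> ('b \<Rightarrow>\<^sub>0 'k::field)) \<Rightarrow> ('a \<Rightarrow>\<^sub>0 'k) \<Rightarrow> ('b \<Rightarrow>\<^sub>0 'k)" where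
  "lin f x = (\<Sum>a\<in>Poly_Mapping.keys x. smul (Poly_Mapping.lookup x a) (f a))"

definition linf :: "('a \<Rightarrow> 'k::field) \<Rightarrow> ('a \<Rightarrow>\<^sub>0 'k) \<Rightarrow> 'k" where
  "linf f x = (\<Sum>a\<in>Poly_Mapping.keys x. Poly_Mapping.lookup x a * f a)"

definition bilin :: "('a \<Rightarrow> 'b \<Rightarrow> ('c \<Rightarrow>\<^sub>0 'k::field)) \<Rightarrow> ('a \<Rightarrow>\<^sub>0 'k) \<Rightarrow> ('b \<Rightarrow>\<^sub>0 'k) \<Rightarrow> ('c \<Rightarrow>\<^sub>0 'k)" where
  "bilin f x y = (\<Sum>a\<in>Poly_Mapping.keys x. \<Sum>b\<in>Poly_Mapping.keys y. smul (Poly_Mapping.lookup x a * Poly_Mapping.lookup y b) (f a b))"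

definition tens :: "('a \<Rightarrow>\<^sub>0 'k::field) \<Rightarrow> ('b \<Rightarrow>\<^sub>0 'k) \<Rightarrow> ('a \<times> 'b \<Rightarrow>\<^sub>0 'k)" where
  "tens x y = bilin (\<lambda>a b. bv (a, b)) x y"

definition tmul :: "('a \<Rightarrow> 'a \<Rightarrow> ('a \<Rightarrow>\<^sub>0 'k::field)) \<Rightarrow> ('b \<Rightarrow> 'b \<Rightarrow> ('b \<Rightarrow>\<^sub>0 'k))
    \<Rightarrow> ('a \<times> 'b) \<Rightarrow> ('a \<times> 'b) \<Rightarrow> ('a \<times> 'b \<Rightarrow>\<^sub>0 'k)" where
  "tmul m1 m2 = (\<lambda>(a1, a2) (b1, b2). tens (m1 a1 b1) (m2 a2 b2))"

definition is_algebra :: "('a \<Rightarrow> 'a \<Rightarrow> ('a \<Rightarrow>\<^sub>0 'k::field)) \<Rightarrow> ('a \<Rightarrow>\<^sub>0 'k) \<Rightarrow> bool" where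
  "is_algebra m u \<longleftrightarrow>
     (\<forall>x y z. bilin m (bilin m x y) z = bilin m x (bilin m y z)) \<and>
     (\<forall>x. bilin m u x = x \<and> bilin m x u = x)"

definition invertible_in :: "('a \<Rightarrow> 'a \<Rightarrow> ('a \<Rightarrow>\<^sub>0 'k::field)) \<Rightarrow> ('a \<Rightarrow>\<^sub>0 'k) \<Rightarrow> ('a \<Rightarrow>\<^sub>0 'k) \<Rightarrow> bool" where
  "invertible_in m u x \<longleftrightarrow> (\<exists>y. bilin m x y = u \<and> bilin m y x = u)"

definition ainv :: "('a \<Rightarrow> 'a \<Rightarrow> ('a \<Rightarrow>\<^sub>0 'k::field)) \<Rightarrow> ('a \<Rightarrow>\<^sub>0 'k) \<Rightarrow> ('a \<Rightarrow>\<^sub>0 'k) \<Rightarrow> ('a \<Rightarrow>\<^sub>0 'k)" where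
  "ainv m u x = (THE y. bilin m x y = u \<and> bilin m y x = u)"

record (overloaded) ('u, 'k) hopf_alg =
  hmul :: "'u \<Rightarrow> 'u \<Rightarrow> ('u \<Rightarrow>\<^sub>0 'k)"
  hone :: "'u \<Rightarrow>\<^sub>0 'k"
  hcomul :: "'u \<Rightarrow> ('u \<times> 'u \<Rightarrow>\<^sub>0 'k)"
  hcounit :: "'u \<Rightarrow> 'k"
  hanti :: "'u \<Rightarrow> ('u \<Rightarrow>\<^sub>0 'k)"

definition hopf_algebra :: "('u, 'k::field) hopf_alg \<Rightarrow> bool" where
  "hopf_algebra A \<longleftrightarrow>
     is_algebra (hmul A) (hone A) \<and>
     (\<forall>a. lin (\<lambda>(x, y). lin (\<lambda>(p, q). bv (p, q, y)) (hcomul A x)) (hcomul A a)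
         = lin (\<lambda>(x, y). lin (\<lambda>(p, q). bv (x, p, q)) (hcomul A y)) (hcomul A a)) \<and>
     (\<forall>a. lin (\<lambda>(x, y). smul (hcounit A x) (bv y)) (hcomul A a) = bv a \<and>
          lin (\<lambda>(x, y). smul (hcounit A y) (bv x)) (hcomul A a) = bv a) \<and>
     (\<forall>a b. lin (hcomul A) (hmul A a b)
            = bilin (tmul (hmul A) (hmul A)) (hcomul A a) (hcomul A b)) \<and>
     lin (hcomul A) (hone A) = tens (hone A) (hone A) \<and>
     (\<forall>a b. linf (hcounit A) (hmul A a b) = hcounit A a * hcounit A b) \<and>
     linf (hcounit A) (hone A) = 1 \<and>
     (\<forall>a. lin (\<lambda>(x, y). bilin (hmul A) (hanti A x) (bv y)) (hcomul A a)
            = smul (hcounit A a) (hone A) \<and>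
          lin (\<lambda>(x, y). bilin (hmul A) (bv x) (hanti A y)) (hcomul A a)
            = smul (hcounit A a) (hone A))"

definition emb12 :: "('u, 'k::field) hopf_alg \<Rightarrow> ('u \<times> 'u \<Rightarrow>\<^sub>0 'k) \<Rightarrow> ('u \<times> 'u \<times> 'u \<Rightarrow>\<^sub>0 'k)" where
  "emb12 A R = lin (\<lambda>(x, y). lin (\<lambda>c. bv (x, y, c)) (hone A)) R"
definition emb13 :: "('u, 'k::field) hopf_alg \<Rightarrow> ('u \<times> 'u \<Rightarrow>\<^sub>0 'k) \<Rightarrow> ('u \<times> 'u \<times> 'u \<Rightarrow>\<^sub>0 'k)" where
  "emb13 A R = lin (\<lambda>(x, y). lin (\<lambda>c. bv (x, c, y)) (hone A)) R"
definition emb23 :: "('u, 'k::field) hopf_alg \<Rightarrow> ('u \<times> 'u \<Rightarrow>\<^sub>0 'k) \<Rightarrow> ('u \<times> 'u \<times> 'u \<Rightarrow>\<^sub>0 'k)" where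
  "emb23 A R = lin (\<lambda>(x, y). lin (\<lambda>c. bv (c, x, y)) (hone A)) R"

definition quasitriangular :: "('u, 'k::field) hopf_alg \<Rightarrow> ('u \<times> 'u \<Rightarrow>\<^sub>0 'k) \<Rightarrow> bool" where
  "quasitriangular A R \<longleftrightarrow>
     hopf_algebra A \<and>
     invertible_in (tmul (hmul A) (hmul A)) (tens (hone A) (hone A)) R \<and>
     (\<forall>a. bilin (tmul (hmul A) (hmul A)) R (hcomul A a)
          = bilin (tmul (hmul A) (hmul A)) (lin (\<lambda>(x, y). bv (y, x)) (hcomul A a)) R) \<and>
     lin (\<lambda>(x, y). lin (\<lambda>(p, q). bv (p, q, y)) (hcomul A x)) R
       = bilin (tmul (hmul A) (tmul (hmul A) (hmul A))) (emb13 A R) (emb23 A R) \<and>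
     lin (\<lambda>(x, y). lin (\<lambda>(p, q). bv (x, p, q)) (hcomul A y)) R
       = bilin (tmul (hmul A) (tmul (hmul A) (hmul A))) (emb13 A R) (emb12 A R)"

text \<open>Hopf subalgebra H of U.  The basis of U is chosen adapted to H (possible over a
field): H is the span of the basis vectors indexed by BH, i.e. the vectors with keys in BH.\<close>
definition hopf_subalgebra :: "('u, 'k::field) hopf_alg \<Rightarrow> 'u set \<Rightarrow> bool" where
  "hopf_subalgebra A BH \<longleftrightarrow>
     Poly_Mapping.keys (hone A) \<subseteq> BH \<and>
     (\<forall>a\<in>BH. \<forall>b\<in>BH. Poly_Mapping.keys (hmul A a b) \<subseteq> BH) \<and>
     (\<forall>a\<in>BH. Poly_Mapping.keys (hcomul A a) \<subseteq> BH \<times> BH) \<and>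
     (\<forall>a\<in>BH. Poly_Mapping.keys (hanti A a) \<subseteq> BH)"

definition subsp :: "'u set \<Rightarrow> ('u \<Rightarrow>\<^sub>0 'k::field) set" where
  "subsp BH = {x. Poly_Mapping.keys x \<subseteq> BH}"

record (overloaded) ('u, 'l, 'k) base_alg =
  lmul :: "'l \<Rightarrow> 'l \<Rightarrow> ('l \<Rightarrow>\<^sub>0 'k)"
  lone :: "'l \<Rightarrow>\<^sub>0 'k"
  lact :: "'u \<Rightarrow> 'l \<Rightarrow> ('l \<Rightarrow>\<^sub>0 'k)"
  lcoact :: "'l \<Rightarrow> ('u \<times> 'l \<Rightarrow>\<^sub>0 'k)"

text \<open>The action h |> l (only meaningful for h in H).\<close>
definition actx :: "('u, 'l, 'k::field) base_alg \<Rightarrow> ('u \<Rightarrow>\<^sub>0 'k) \<Rightarrow> ('l \<Rightarrow>\<^sub>0 'k) \<Rightarrow> ('l \<Rightarrow>\<^sub>0 'k)" where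
  "actx B h l = bilin (lact B) h l"

definition base_algebra :: "('u, 'k::field) hopf_alg \<Rightarrow> 'u set \<Rightarrow> ('u, 'l, 'k) base_alg \<Rightarrow> bool" where
  "base_algebra A BH B \<longleftrightarrow>
     is_algebra (lmul B) (lone B) \<and>
     \<comment> \<open>left H-module algebra\<close>
     (\<forall>l. actx B (hone A) l = l) \<and>
     (\<forall>a\<in>BH. \<forall>b\<in>BH. \<forall>l. actx B (hmul A a b) l = actx B (bv a) (actx B (bv b) l)) \<and>
     (\<forall>a\<in>BH. \<forall>l l'. actx B (bv a) (bilin (lmul B) l l')
        = lin (\<lambda>(x, y). bilin (lmul B) (actx B (bv x) l) (actx B (bv y) l')) (hcomul A a)) \<and>
     (\<forall>a\<in>BH. actx B (bv a) (lone B) = smul (hcounit A a) (lone B)) \<and>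
     \<comment> \<open>left H-comodule algebra\<close>
     (\<forall>l. Poly_Mapping.keys (lcoact B l) \<subseteq> BH \<times> UNIV) \<and>
     (\<forall>l. lin (\<lambda>(u, m). lin (\<lambda>(p, q). bv (p, q, m)) (hcomul A u)) (lcoact B l)
          = lin (\<lambda>(u, m). lin (\<lambda>(v, n). bv (u, v, n)) (lcoact B m)) (lcoact B l)) \<and>
     (\<forall>l. lin (\<lambda>(u, m). smul (hcounit A u) (bv m)) (lcoact B l) = bv l) \<and>
     (\<forall>l l'. lin (lcoact B) (lmul B l l')
          = bilin (tmul (hmul A) (lmul B)) (lcoact B l) (lcoact B l')) \<and>
     lin (lcoact B) (lone B) = tens (hone A) (lone B) \<and>
     \<comment> \<open>compatibility conditions\<close>
     (\<forall>a\<in>BH. \<forall>l.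
        lin (\<lambda>(x, y). bilin (tmul (hmul A) (lmul B))
               (lin (lcoact B) (actx B (bv x) (bv l))) (tens (bv y) (lone B))) (hcomul A a)
      = lin (\<lambda>(x, y). lin (\<lambda>(u, m). tens (hmul A x u) (actx B (bv y) (bv m))) (lcoact B l))
            (hcomul A a)) \<and>
     (\<forall>l1 l2. bilin (lmul B) (bv l1) l2
        = lin (\<lambda>(u, m). bilin (lmul B) (actx B (bv u) l2) (bv m)) (lcoact B l1))"

definition mul3 :: "('u, 'k::field) hopf_alg \<Rightarrow> ('u, 'l, 'k) base_alg
    \<Rightarrow> ('u \<times> 'u \<times> 'l) \<Rightarrow> ('u \<times> 'u \<times> 'l) \<Rightarrow> ('u \<times> 'u \<times> 'l \<Rightarrow>\<^sub>0 'k)" where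
  "mul3 A B = tmul (hmul A) (tmul (hmul A) (lmul B))"

definition one3 :: "('u, 'k::field) hopf_alg \<Rightarrow> ('u, 'l, 'k) base_alg \<Rightarrow> ('u \<times> 'u \<times> 'l \<Rightarrow>\<^sub>0 'k)" where
  "one3 A B = tens (hone A) (tens (hone A) (lone B))"

definition mul4 :: "('u, 'k::field) hopf_alg \<Rightarrow> ('u, 'l, 'k) base_alg
    \<Rightarrow> ('u \<times> 'u \<times> 'u \<times> 'l) \<Rightarrow> ('u \<times> 'u \<times> 'u \<times> 'l) \<Rightarrow> ('u \<times> 'u \<times> 'u \<times> 'l \<Rightarrow>\<^sub>0 'k)" where
  "mul4 A B = tmul (hmul A) (tmul (hmul A) (tmul (hmul A) (lmul B)))"

text \<open>R identified with R (x) 1 in U (x) U (x) L.\<close>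
definition Rlift :: "('u, 'l, 'k::field) base_alg \<Rightarrow> ('u \<times> 'u \<Rightarrow>\<^sub>0 'k) \<Rightarrow> ('u \<times> 'u \<times> 'l \<Rightarrow>\<^sub>0 'k)" where
  "Rlift B R = lin (\<lambda>(x, y). lin (\<lambda>c. bv (x, y, c)) (lone B)) R"

definition flip21 :: "('u \<times> 'u \<times> 'l \<Rightarrow>\<^sub>0 'k::field) \<Rightarrow> ('u \<times> 'u \<times> 'l \<Rightarrow>\<^sub>0 'k)" where
  "flip21 X = lin (\<lambda>(a, b, l). bv (b, a, l)) X"

definition X12 :: "('u, 'k::field) hopf_alg \<Rightarrow> ('u \<times> 'u \<times> 'l \<Rightarrow>\<^sub>0 'k) \<Rightarrow> ('u \<times> 'u \<times> 'u \<times> 'l \<Rightarrow>\<^sub>0 'k)" where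
  "X12 A X = lin (\<lambda>(a, b, l). lin (\<lambda>c. bv (a, b, c, l)) (hone A)) X"
definition X13 :: "('u, 'k::field) hopf_alg \<Rightarrow> ('u \<times> 'u \<times> 'l \<Rightarrow>\<^sub>0 'k) \<Rightarrow> ('u \<times> 'u \<times> 'u \<times> 'l \<Rightarrow>\<^sub>0 'k)" where
  "X13 A X = lin (\<lambda>(a, b, l). lin (\<lambda>c. bv (a, c, b, l)) (hone A)) X"
definition X23 :: "('u, 'k::field) hopf_alg \<Rightarrow> ('u \<times> 'u \<times> 'l \<Rightarrow>\<^sub>0 'k) \<Rightarrow> ('u \<times> 'u \<times> 'u \<times> 'l \<Rightarrow>\<^sub>0 'k)" where
  "X23 A X = lin (\<lambda>(a, b, l). lin (\<lambda>c. bv (c, a, b, l)) (hone A)) X"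

definition sh3 :: "('u, 'l, 'k::field) base_alg \<Rightarrow> ('u \<times> 'u \<times> 'l \<Rightarrow>\<^sub>0 'k) \<Rightarrow> ('u \<times> 'u \<times> 'u \<times> 'l \<Rightarrow>\<^sub>0 'k)" where
  "sh3 B X = lin (\<lambda>(a, b, l). lin (\<lambda>(u, m). bv (a, b, u, m)) (lcoact B l)) X"
definition sh2 :: "('u, 'l, 'k::field) base_alg \<Rightarrow> ('u \<times> 'u \<times> 'l \<Rightarrow>\<^sub>0 'k) \<Rightarrow> ('u \<times> 'u \<times> 'u \<times> 'l \<Rightarrow>\<^sub>0 'k)" where
  "sh2 B X = lin (\<lambda>(a, b, l). lin (\<lambda>(u, m). bv (a, u, b, m)) (lcoact B l)) X"
definition sh1 :: "('u, 'l, 'k::field) base_alg \<Rightarrow> ('u \<times> 'u \<times> 'l \<Rightarrow>\<^sub>0 'k) \<Rightarrow> ('u \<times> 'u \<times> 'u \<times> 'l \<Rightarrow>\<^sub>0 'k)" where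
  "sh1 B X = lin (\<lambda>(a, b, l). lin (\<lambda>(u, m). bv (u, a, b, m)) (lcoact B l)) X"

definition DeltaL :: "('u, 'k::field) hopf_alg \<Rightarrow> ('u \<times> 'u \<times> 'l \<Rightarrow>\<^sub>0 'k) \<Rightarrow> ('u \<times> 'u \<times> 'u \<times> 'l \<Rightarrow>\<^sub>0 'k)" where
  "DeltaL A X = lin (\<lambda>(a, b, l). lin (\<lambda>(p, q). bv (p, q, b, l)) (hcomul A a)) X"
definition DeltaR :: "('u, 'k::field) hopf_alg \<Rightarrow> ('u \<times> 'u \<times> 'l \<Rightarrow>\<^sub>0 'k) \<Rightarrow> ('u \<times> 'u \<times> 'u \<times> 'l \<Rightarrow>\<^sub>0 'k)" where
  "DeltaR A X = lin (\<lambda>(a, b, l). lin (\<lambda>(p, q). bv (a, p, q, l)) (hcomul A b)) X"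

definition Delta2 :: "('u, 'k::field) hopf_alg \<Rightarrow> ('u \<Rightarrow>\<^sub>0 'k) \<Rightarrow> ('u \<times> 'u \<times> 'u \<Rightarrow>\<^sub>0 'k)" where
  "Delta2 A h = lin (\<lambda>(a, r). tens (bv a) (hcomul A r)) (lin (hcomul A) h)"
definition Delta_one :: "('u, 'k::field) hopf_alg \<Rightarrow> ('u, 'l, 'k) base_alg \<Rightarrow> ('u \<Rightarrow>\<^sub>0 'k) \<Rightarrow> ('u \<times> 'u \<times> 'l \<Rightarrow>\<^sub>0 'k)" where
  "Delta_one A B h = lin (\<lambda>(a, b). tens (bv a) (tens (bv b) (lone B))) (lin (hcomul A) h)"

definition dyn_twist :: "('u, 'k::field) hopf_alg \<Rightarrow> 'u set \<Rightarrow> ('u, 'l, 'k) base_alg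
    \<Rightarrow> ('u \<times> 'u \<times> 'l \<Rightarrow>\<^sub>0 'k) \<Rightarrow> bool" where
  "dyn_twist A BH B F \<longleftrightarrow>
     invertible_in (mul3 A B) (one3 A B) F \<and>
     (\<forall>h\<in>subsp BH.
        lin (\<lambda>(a, b, c). lin (\<lambda>(f1, f2, f3).
               tens (bilin (hmul A) (bv a) (bv f1))
                 (tens (bilin (hmul A) (bv b) (bv f2)) (actx B (bv c) (bv f3)))) F) (Delta2 A h)
        = bilin (mul3 A B) F (Delta_one A B h)) \<and>
     bilin (mul4 A B) (DeltaL A F) (sh3 B F) = bilin (mul4 A B) (DeltaR A F) (X23 A F) \<and>
     lin (\<lambda>(a, b, l). smul (hcounit A a) (tens (bv b) (bv l))) F = tens (hone A) (lone B) \<and>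
     lin (\<lambda>(a, b, l). smul (hcounit A b) (tens (bv a) (bv l))) F = tens (hone A) (lone B)"

definition dyn_R_matrix :: "('u, 'k::field) hopf_alg \<Rightarrow> 'u set \<Rightarrow> ('u, 'l, 'k) base_alg
    \<Rightarrow> ('u \<times> 'u \<times> 'l \<Rightarrow>\<^sub>0 'k) \<Rightarrow> bool" where
  "dyn_R_matrix A BH B Rb \<longleftrightarrow>
     (\<forall>h\<in>subsp BH.
        lin (\<lambda>(a, b, c). lin (\<lambda>(f1, f2, f3).
               tens (bilin (hmul A) (bv b) (bv f1))
                 (tens (bilin (hmul A) (bv a) (bv f2)) (actx B (bv c) (bv f3)))) Rb) (Delta2 A h)
        = bilin (mul3 A B) Rb (Delta_one A B h)) \<and>
     bilin (mul4 A B) (bilin (mul4 A B) (X12 A Rb) (sh2 B Rb)) (X23 A Rb)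
       = bilin (mul4 A B) (bilin (mul4 A B) (sh1 B Rb) (X13 A Rb)) (sh3 B Rb)"

end

theory Submission
  imports Defs
begin

text \<open>
  Let Phi = (Delta (x) id)(F) (3)F, which by the cocycle identity equals (id (x) Delta)(F) F_23.
  Since R Delta(x) = Delta^op(x) R, the factor R_12 commutes past (Delta (x) id)(F) and R_23
  past (id (x) Delta)(F) up to a swap of legs, and F_21 Rbar = R F then yields
  R_12 Phi = Phi^213 (3)Rbar_12 and R_23 Phi = Phi^132 Rbar_23. Applying leg permutations
  gives such a relation for each of R_12, R_13, R_23 in the quantum Yang-Baxter equation
  R_12 R_13 R_23 = R_23 R_13 R_12; multiplying it by Phi on the right and pushing Phi to the
  left leaves the dynamical Yang-Baxter equation times the invertible Phi^321.

  For H-invariance, the action Y |-> h(2) Y_1 (x) h(1) Y_2 (x) h(3) |> Y_3 obeys a Leibniz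
  rule on products whose left factor is invariant, so for h in H
  F_21 (h . Rbar) = h . (F_21 Rbar) = h . (R F) = R F Delta(h) = F_21 Rbar Delta(h),
  and F_21 cancels.
\<close>

section \<open>Linear maps between spaces of coefficient functions\<close>

lemma lookup_smul [simp]: "Poly_Mapping.lookup (smul c x) a = c * Poly_Mapping.lookup x a"
  unfolding smul_def by (simp add: Poly_Mapping.map.rep_eq when_def)

lemma lookup_bv: "Poly_Mapping.lookup (bv b) a = (if b = a then (1::'k::field) else 0)"
  unfolding bv_def by (simp add: lookup_single when_def)

lemma keys_bv [simp]: "Poly_Mapping.keys (bv b :: 'b \<Rightarrow>\<^sub>0 'k::field) = {b}"
  unfolding bv_def by simp

lemma smul_add_left: "smul (c + d) v = smul c v + smul d v"
  by (rule poly_mapping_eqI) (simp add: lookup_add algebra_simps)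

lemma smul_add_right: "smul c (v + w) = smul c v + smul c w"
  by (rule poly_mapping_eqI) (simp add: lookup_add algebra_simps)

lemma smul_smul [simp]: "smul c (smul d v) = smul (c * d) v"
  by (rule poly_mapping_eqI) (simp add: algebra_simps)

lemma smul_zero_left [simp]: "smul 0 v = 0"
  by (rule poly_mapping_eqI) simp

lemma smul_one [simp]: "smul 1 v = v"
  by (rule poly_mapping_eqI) simp

lemma smul_sum: "smul c (sum f S) = (\<Sum>a\<in>S. smul c (f a))"
  by (rule poly_mapping_eqI) (simp add: lookup_sum sum_distrib_left)

lemma keys_smul_subset: "Poly_Mapping.keys (smul c x) \<subseteq> Poly_Mapping.keys x"
  by (auto simp: in_keys_iff)

lemma lin_eq_sum_superset:
  assumes "finite S" "Poly_Mapping.keys x \<subseteq> S"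
  shows "lin f x = (\<Sum>a\<in>S. smul (Poly_Mapping.lookup x a) (f a))"
  unfolding lin_def
  by (rule sum.mono_neutral_left) (use assms in \<open>auto simp: in_keys_iff\<close>)

lemma lin_add: "lin f (x + y) = lin f x + lin f y"
proof -
  let ?S = "Poly_Mapping.keys x \<union> Poly_Mapping.keys y"
  have "lin f (x + y) = (\<Sum>a\<in>?S. smul (Poly_Mapping.lookup (x + y) a) (f a))"
    using keys_add[of x y] by (intro lin_eq_sum_superset) auto
  also have "\<dots> = (\<Sum>a\<in>?S. smul (Poly_Mapping.lookup x a) (f a))
                  + (\<Sum>a\<in>?S. smul (Poly_Mapping.lookup y a) (f a))"
    by (simp add: lookup_add smul_add_left sum.distrib)
  also have "\<dots> = lin f x + lin f y"
    by (subst (1 2) lin_eq_sum_superset[where S = ?S]) auto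
  finally show ?thesis .
qed

lemma lin_smul: "lin f (smul c x) = smul c (lin f x)"
proof -
  have "lin f (smul c x) = (\<Sum>a\<in>Poly_Mapping.keys x. smul (Poly_Mapping.lookup (smul c x) a) (f a))"
    by (intro lin_eq_sum_superset) (auto simp: keys_smul_subset)
  then show ?thesis by (simp add: lin_def smul_sum)
qed

lemma lin_bv [simp]: "lin f (bv a) = f a"
  by (simp add: lin_def lookup_bv)

lemma lin_bv_id: "lin bv x = x"
proof (rule poly_mapping_eqI)
  fix b
  have "Poly_Mapping.lookup (lin bv x) b
      = (\<Sum>a\<in>Poly_Mapping.keys x. Poly_Mapping.lookup x a * (if a = b then 1 else 0))"
    by (simp add: lin_def lookup_sum lookup_bv)
  also have "\<dots> = Poly_Mapping.lookup x b"
    by (cases "b \<in> Poly_Mapping.keys x") (auto simp: in_keys_iff if_distrib cong: if_cong)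
  finally show "Poly_Mapping.lookup (lin bv x) b = Poly_Mapping.lookup x b" .
qed

lemma lin_cong: "(\<And>a. a \<in> Poly_Mapping.keys x \<Longrightarrow> f a = g a) \<Longrightarrow> lin f x = lin g x"
  by (simp add: lin_def)

lemma lin_add_fun: "lin (\<lambda>a. f a + g a) x = lin f x + lin g x"
  unfolding lin_def by (simp add: smul_add_right sum.distrib)

lemma lin_smul_fun: "lin (\<lambda>a. smul c (f a)) x = smul c (lin f x)"
  unfolding lin_def by (simp add: smul_sum mult.commute)

lemma bilin_eq_lin: "bilin m x y = lin (\<lambda>a. lin (m a) y) x"
  unfolding bilin_def lin_def by (simp add: smul_sum mult.commute)

lemma bilin_bv [simp]: "bilin m (bv a) (bv b) = m a b"
  by (simp add: bilin_eq_lin)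

lemma tens_eq_lin: "tens x y = lin (\<lambda>a. lin (\<lambda>b. bv (a, b)) y) x"
  by (simp add: tens_def bilin_eq_lin)

lemma tens_bv [simp]: "tens (bv a) (bv b) = bv (a, b)"
  by (simp add: tens_def)

lemma bv_pair_tens: "bv (a, b) = tens (bv a) (bv b)"
  by simp

lemma bv_triple_tens: "bv (a, b, c) = tens (bv a) (tens (bv b) (bv c))"
  by simp

lemma bv_quadruple_tens: "bv (a, b, c, d) = tens (bv a) (tens (bv b) (tens (bv c) (bv d)))"
  by simp

definition linear_fun :: "(('a \<Rightarrow>\<^sub>0 'k::field) \<Rightarrow> ('b \<Rightarrow>\<^sub>0 'k)) \<Rightarrow> bool" where
  "linear_fun \<phi> \<longleftrightarrow>
     (\<forall>x y. \<phi> (x + y) = \<phi> x + \<phi> y) \<and> (\<forall>c x. \<phi> (smul c x) = smul c (\<phi> x))"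

named_theorems linear_fun_intros

lemma linear_fun_add: "linear_fun \<phi> \<Longrightarrow> \<phi> (x + y) = \<phi> x + \<phi> y"
  by (simp add: linear_fun_def)

lemma linear_fun_smul: "linear_fun \<phi> \<Longrightarrow> \<phi> (smul c x) = smul c (\<phi> x)"
  by (simp add: linear_fun_def)

lemma linear_fun_zero: "linear_fun \<phi> \<Longrightarrow> \<phi> 0 = 0"
  using linear_fun_smul[of \<phi> 0 0] by simp

lemma linear_fun_sum: "linear_fun \<phi> \<Longrightarrow> \<phi> (sum f S) = (\<Sum>a\<in>S. \<phi> (f a))"
  by (induction S rule: infinite_finite_induct) (auto simp: linear_fun_zero linear_fun_add)

lemma linear_fun_eq_lin:
  assumes "linear_fun \<phi>"
  shows "\<phi> x = lin (\<lambda>a. \<phi> (bv a)) x"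
proof -
  have "\<phi> x = \<phi> (lin bv x)" by (simp add: lin_bv_id)
  also have "\<dots> = lin (\<lambda>a. \<phi> (bv a)) x"
    unfolding lin_def by (simp add: linear_fun_sum[OF assms] linear_fun_smul[OF assms])
  finally show ?thesis .
qed

lemma linear_fun_eqI:
  assumes "linear_fun \<phi>" "linear_fun \<psi>" "\<And>a. \<phi> (bv a) = \<psi> (bv a)"
  shows "\<phi> x = \<psi> x"
proof -
  have "\<phi> x = lin (\<lambda>a. \<phi> (bv a)) x" by (rule linear_fun_eq_lin[OF assms(1)])
  also have "\<dots> = \<psi> x" by (simp add: assms(3) linear_fun_eq_lin[OF assms(2), symmetric])
  finally show ?thesis .
qed

lemma linear_fun_id [linear_fun_intros]: "linear_fun (\<lambda>x. x)"
  by (simp add: linear_fun_def)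

lemma linear_fun_lin [linear_fun_intros]: "linear_fun (lin f)"
  by (simp add: linear_fun_def lin_add lin_smul)

lemma linear_fun_lin_comp [linear_fun_intros]: "linear_fun \<phi> \<Longrightarrow> linear_fun (\<lambda>x. lin f (\<phi> x))"
  by (simp add: linear_fun_def lin_add lin_smul)

lemma linear_fun_smul_comp [linear_fun_intros]: "linear_fun \<phi> \<Longrightarrow> linear_fun (\<lambda>x. smul c (\<phi> x))"
  by (simp add: linear_fun_def smul_add_right mult.commute)

lemma linear_fun_lin_pointwise [linear_fun_intros]:
  "(\<And>a. linear_fun (\<lambda>y. f a y)) \<Longrightarrow> linear_fun (\<lambda>y. lin (\<lambda>a. f a y) x)"
  by (simp add: linear_fun_def lin_add_fun lin_smul_fun)

lemma linear_fun_bilin_left [linear_fun_intros]: "linear_fun \<phi> \<Longrightarrow> linear_fun (\<lambda>x. bilin m (\<phi> x) y)"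
  unfolding bilin_eq_lin by (rule linear_fun_lin_comp)

lemma linear_fun_bilin_right [linear_fun_intros]: "linear_fun \<phi> \<Longrightarrow> linear_fun (\<lambda>x. bilin m y (\<phi> x))"
  unfolding bilin_eq_lin by (intro linear_fun_lin_pointwise linear_fun_lin_comp)

lemma linear_fun_tens_left [linear_fun_intros]: "linear_fun \<phi> \<Longrightarrow> linear_fun (\<lambda>x. tens (\<phi> x) y)"
  unfolding tens_def by (rule linear_fun_bilin_left)

lemma linear_fun_tens_right [linear_fun_intros]: "linear_fun \<phi> \<Longrightarrow> linear_fun (\<lambda>x. tens y (\<phi> x))"
  unfolding tens_def by (rule linear_fun_bilin_right)

lemma lin_lin: "lin g (lin f x) = lin (\<lambda>a. lin g (f a)) x"
  by (rule linear_fun_eqI[where \<phi> = "\<lambda>x. lin g (lin f x)"]) (auto intro: linear_fun_intros)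

lemma linear_fun_apply_lin:
  assumes "linear_fun \<phi>"
  shows "\<phi> (lin f v) = lin (\<lambda>a. \<phi> (f a)) v"
proof -
  have "\<phi> (lin f v) = lin (\<lambda>a. lin (\<lambda>b. \<phi> (bv b)) (f a)) v"
    by (simp add: linear_fun_eq_lin[OF assms, of "lin f v"] lin_lin)
  also have "\<dots> = lin (\<lambda>a. \<phi> (f a)) v"
    by (simp add: linear_fun_eq_lin[OF assms, symmetric])
  finally show ?thesis .
qed

lemma bilin_lin_left: "bilin m (lin f v) w = lin (\<lambda>a. bilin m (f a) w) v"
  by (rule linear_fun_apply_lin[where \<phi> = "\<lambda>x. bilin m x w"]) (intro linear_fun_intros)

lemma bilin_lin_right: "bilin m w (lin f v) = lin (\<lambda>a. bilin m w (f a)) v"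
  by (rule linear_fun_apply_lin[where \<phi> = "\<lambda>x. bilin m w x"]) (intro linear_fun_intros)

lemma linear_fun_eqI2:
  assumes "\<And>y. linear_fun (\<lambda>x. \<phi> x y)" "\<And>x. linear_fun (\<lambda>y. \<phi> x y)"
    "\<And>y. linear_fun (\<lambda>x. \<psi> x y)" "\<And>x. linear_fun (\<lambda>y. \<psi> x y)"
    "\<And>a b. \<phi> (bv a) (bv b) = \<psi> (bv a) (bv b)"
  shows "\<phi> x y = \<psi> x y"
proof -
  have on_basis: "\<And>a. \<phi> (bv a) y = \<psi> (bv a) y"
    by (rule linear_fun_eqI[where \<phi> = "\<lambda>y. \<phi> (bv _) y"]) (use assms in auto)
  show ?thesis
    by (rule linear_fun_eqI[where \<phi> = "\<lambda>x. \<phi> x y" and \<psi> = "\<lambda>x. \<psi> x y"])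
      (use assms on_basis in auto)
qed

lemma linear_fun_eqI3:
  assumes "\<And>y z. linear_fun (\<lambda>x. \<phi> x y z)" "\<And>x z. linear_fun (\<lambda>y. \<phi> x y z)"
    "\<And>x y. linear_fun (\<lambda>z. \<phi> x y z)"
    "\<And>y z. linear_fun (\<lambda>x. \<psi> x y z)" "\<And>x z. linear_fun (\<lambda>y. \<psi> x y z)"
    "\<And>x y. linear_fun (\<lambda>z. \<psi> x y z)"
    "\<And>a b c. \<phi> (bv a) (bv b) (bv c) = \<psi> (bv a) (bv b) (bv c)"
  shows "\<phi> x y z = \<psi> x y z"
proof -
  have on_basis: "\<And>a. \<phi> (bv a) y z = \<psi> (bv a) y z"
    by (rule linear_fun_eqI2[where \<phi> = "\<lambda>y z. \<phi> (bv _) y z"]) (use assms in auto)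
  show ?thesis
    by (rule linear_fun_eqI[where \<phi> = "\<lambda>x. \<phi> x y z" and \<psi> = "\<lambda>x. \<psi> x y z"])
      (use assms on_basis in auto)
qed

lemma linear_fun_eqI4:
  assumes "\<And>y z w. linear_fun (\<lambda>x. \<phi> x y z w)" "\<And>x z w. linear_fun (\<lambda>y. \<phi> x y z w)"
    "\<And>x y w. linear_fun (\<lambda>z. \<phi> x y z w)" "\<And>x y z. linear_fun (\<lambda>w. \<phi> x y z w)"
    "\<And>y z w. linear_fun (\<lambda>x. \<psi> x y z w)" "\<And>x z w. linear_fun (\<lambda>y. \<psi> x y z w)"
    "\<And>x y w. linear_fun (\<lambda>z. \<psi> x y z w)" "\<And>x y z. linear_fun (\<lambda>w. \<psi> x y z w)"
    "\<And>a b c d. \<phi> (bv a) (bv b) (bv c) (bv d) = \<psi> (bv a) (bv b) (bv c) (bv d)"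
  shows "\<phi> x y z w = \<psi> x y z w"
proof -
  have on_basis: "\<And>a. \<phi> (bv a) y z w = \<psi> (bv a) y z w"
    by (rule linear_fun_eqI3[where \<phi> = "\<lambda>y z w. \<phi> (bv _) y z w"]) (use assms in auto)
  show ?thesis
    by (rule linear_fun_eqI[where \<phi> = "\<lambda>x. \<phi> x y z w" and \<psi> = "\<lambda>x. \<psi> x y z w"])
      (use assms on_basis in auto)
qed

lemma bilin_tmul_tens:
  "bilin (tmul m1 m2) (tens x1 x2) (tens y1 y2) = tens (bilin m1 x1 y1) (bilin m2 x2 y2)"
  by (rule linear_fun_eqI4[where \<phi> = "\<lambda>x1 x2 y1 y2. bilin (tmul m1 m2) (tens x1 x2) (tens y1 y2)"])
    ((rule linear_fun_intros)+ | simp add: tmul_def)+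


lemma is_algebra_tmul:
  fixes m1 :: "'a \<Rightarrow> 'a \<Rightarrow> ('a \<Rightarrow>\<^sub>0 'k::field)"
    and m2 :: "'b \<Rightarrow> 'b \<Rightarrow> ('b \<Rightarrow>\<^sub>0 'k)"
  assumes "is_algebra m1 u1" "is_algebra m2 u2"
  shows "is_algebra (tmul m1 m2) (tens u1 u2)"
  unfolding is_algebra_def
proof (intro conjI allI)
  fix x y z
  show "bilin (tmul m1 m2) (bilin (tmul m1 m2) x y) z = bilin (tmul m1 m2) x (bilin (tmul m1 m2) y z)"
  proof (rule linear_fun_eqI3[where \<phi> = "\<lambda>x y z. bilin (tmul m1 m2) (bilin (tmul m1 m2) x y) z"])
    fix a b c :: "'a \<times> 'b"
    show "bilin (tmul m1 m2) (bilin (tmul m1 m2) (bv a) (bv b)) (bv c) =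
          bilin (tmul m1 m2) (bv a) (bilin (tmul m1 m2) (bv b) (bv c))"
      using assms unfolding is_algebra_def
      by (cases a, cases b, cases c) (simp only: bv_pair_tens bilin_tmul_tens)
  qed (rule linear_fun_intros)+
next
  fix x
  show "bilin (tmul m1 m2) (tens u1 u2) x = x"
  proof (rule linear_fun_eqI[where \<phi> = "\<lambda>x. bilin (tmul m1 m2) (tens u1 u2) x" and \<psi> = "\<lambda>x. x"])
    fix a :: "'a \<times> 'b"
    show "bilin (tmul m1 m2) (tens u1 u2) (bv a) = bv a"
      using assms unfolding is_algebra_def by (cases a) (simp only: bv_pair_tens bilin_tmul_tens)
  qed (rule linear_fun_intros)+
  show "bilin (tmul m1 m2) x (tens u1 u2) = x"
  proof (rule linear_fun_eqI[where \<phi> = "\<lambda>x. bilin (tmul m1 m2) x (tens u1 u2)" and \<psi> = "\<lambda>x. x"])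
    fix a :: "'a \<times> 'b"
    show "bilin (tmul m1 m2) (bv a) (tens u1 u2) = bv a"
      using assms unfolding is_algebra_def by (cases a) (simp only: bv_pair_tens bilin_tmul_tens)
  qed (rule linear_fun_intros)+
qed

locale unital_algebra =
  fixes m :: "'a \<Rightarrow> 'a \<Rightarrow> ('a \<Rightarrow>\<^sub>0 'k::field)" and u :: "'a \<Rightarrow>\<^sub>0 'k"
  assumes is_algebra: "is_algebra m u"
begin

lemma assoc: "bilin m (bilin m x y) z = bilin m x (bilin m y z)"
  using is_algebra unfolding is_algebra_def by blast

lemma unit_left [simp]: "bilin m u x = x"
  using is_algebra unfolding is_algebra_def by blast

lemma unit_right [simp]: "bilin m x u = x"
  using is_algebra unfolding is_algebra_def by blast

lemma inverse_unique:
  assumes "bilin m x y = u" "bilin m z x = u"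
  shows "y = z"
proof -
  have "y = bilin m (bilin m z x) y" using assms(2) by simp
  also have "\<dots> = z" by (simp add: assoc assms(1))
  finally show ?thesis .
qed

lemma ainv:
  assumes "invertible_in m u x"
  shows "bilin m x (ainv m u x) = u" "bilin m (ainv m u x) x = u"
proof -
  obtain y where y: "bilin m x y = u" "bilin m y x = u"
    using assms unfolding invertible_in_def by blast
  have "ainv m u x = y"
    unfolding ainv_def by (rule the_equality) (use y inverse_unique in blast)+
  with y show "bilin m x (ainv m u x) = u" "bilin m (ainv m u x) x = u" by auto
qed

lemma cancel_left:
  assumes "invertible_in m u x" "bilin m x y = bilin m x z"
  shows "y = z"
proof -
  have "y = bilin m (bilin m (ainv m u x) x) y" using ainv[OF assms(1)] by simp
  also have "\<dots> = bilin m (ainv m u x) (bilin m x z)" by (simp add: assoc assms(2))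
  also have "\<dots> = z" using ainv[OF assms(1)] by (simp add: assoc[symmetric])
  finally show ?thesis .
qed

lemma invertible_mult:
  assumes "invertible_in m u x" "invertible_in m u y"
  shows "invertible_in m u (bilin m x y)"
proof -
  let ?z = "bilin m (ainv m u y) (ainv m u x)"
  have "bilin m (bilin m x y) ?z = u" "bilin m ?z (bilin m x y) = u"
    using ainv[OF assms(1)] ainv[OF assms(2)] by (simp_all add: assoc[symmetric]) (simp_all add: assoc)
  then show ?thesis unfolding invertible_in_def by blast
qed

end

lemma invertible_hom_image:
  assumes "unital_algebra m u" "unital_algebra m' u'"
    and "\<And>x y. h (bilin m x y) = bilin m' (h x) (h y)" "h u = u'"
    and "invertible_in m u x"
  shows "invertible_in m' u' (h x)"
proof -
  have "bilin m' (h x) (h (ainv m u x)) = u'" "bilin m' (h (ainv m u x)) (h x) = u'"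
    using unital_algebra.ainv[OF assms(1,5)] by (simp_all add: assms(3,4)[symmetric])
  then show ?thesis unfolding invertible_in_def by blast
qed


section \<open>Leg maps and permutations of tensor legs\<close>

definition swap12 :: "('u \<times> 'u \<times> 'u \<times> 'l \<Rightarrow>\<^sub>0 'k::field)
    \<Rightarrow> ('u \<times> 'u \<times> 'u \<times> 'l \<Rightarrow>\<^sub>0 'k)" where
  "swap12 X = lin (\<lambda>(a, b, c, l). bv (b, a, c, l)) X"

definition swap23 :: "('u \<times> 'u \<times> 'u \<times> 'l \<Rightarrow>\<^sub>0 'k::field)
    \<Rightarrow> ('u \<times> 'u \<times> 'u \<times> 'l \<Rightarrow>\<^sub>0 'k)" where
  "swap23 X = lin (\<lambda>(a, b, c, l). bv (a, c, b, l)) X"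

definition legs12 :: "('u \<Rightarrow>\<^sub>0 'k::field) \<Rightarrow> ('l \<Rightarrow>\<^sub>0 'k) \<Rightarrow> ('u \<times> 'u \<Rightarrow>\<^sub>0 'k)
    \<Rightarrow> ('u \<times> 'u \<times> 'u \<times> 'l \<Rightarrow>\<^sub>0 'k)" where
  "legs12 y z v = lin (\<lambda>(p, q). tens (bv p) (tens (bv q) (tens y z))) v"

definition legs23 :: "('u \<Rightarrow>\<^sub>0 'k::field) \<Rightarrow> ('l \<Rightarrow>\<^sub>0 'k) \<Rightarrow> ('u \<times> 'u \<Rightarrow>\<^sub>0 'k)
    \<Rightarrow> ('u \<times> 'u \<times> 'u \<times> 'l \<Rightarrow>\<^sub>0 'k)" where
  "legs23 x z v = lin (\<lambda>(p, q). tens x (tens (bv p) (tens (bv q) z))) v"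

definition legs123 :: "('l \<Rightarrow>\<^sub>0 'k::field) \<Rightarrow> ('u \<times> 'u \<times> 'u \<Rightarrow>\<^sub>0 'k)
    \<Rightarrow> ('u \<times> 'u \<times> 'u \<times> 'l \<Rightarrow>\<^sub>0 'k)" where
  "legs123 z w = lin (\<lambda>(a, b, c). tens (bv a) (tens (bv b) (tens (bv c) z))) w"

lemma linear_fun_legs [linear_fun_intros]:
  assumes "linear_fun \<phi>"
  shows "linear_fun (\<lambda>x. X12 A (\<phi> x))" "linear_fun (\<lambda>x. X13 A (\<phi> x))"
    "linear_fun (\<lambda>x. X23 A (\<phi> x))" "linear_fun (\<lambda>x. sh1 B (\<phi> x))"
    "linear_fun (\<lambda>x. sh2 B (\<phi> x))" "linear_fun (\<lambda>x. sh3 B (\<phi> x))"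
    "linear_fun (\<lambda>x. DeltaL A (\<phi> x))" "linear_fun (\<lambda>x. DeltaR A (\<phi> x))"
  unfolding X12_def X13_def X23_def sh1_def sh2_def sh3_def DeltaL_def DeltaR_def
  by (rule linear_fun_lin_comp[OF assms])+

lemma linear_fun_perms [linear_fun_intros]:
  "linear_fun \<phi> \<Longrightarrow> linear_fun (\<lambda>x. flip21 (\<phi> x))"
  "linear_fun \<psi> \<Longrightarrow> linear_fun (\<lambda>x. swap12 (\<psi> x))"
  "linear_fun \<psi> \<Longrightarrow> linear_fun (\<lambda>x. swap23 (\<psi> x))"
  unfolding flip21_def swap12_def swap23_def by (simp_all add: linear_fun_lin_comp)

lemma linear_fun_embeddings [linear_fun_intros]:
  "linear_fun \<phi> \<Longrightarrow> linear_fun (\<lambda>x. Rlift B (\<phi> x))"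
  "linear_fun \<phi> \<Longrightarrow> linear_fun (\<lambda>x. legs12 y z (\<phi> x))"
  "linear_fun \<phi> \<Longrightarrow> linear_fun (\<lambda>x. legs23 y z (\<phi> x))"
  "linear_fun \<psi> \<Longrightarrow> linear_fun (\<lambda>x. legs123 z (\<psi> x))"
  "linear_fun \<phi> \<Longrightarrow> linear_fun (\<lambda>x. emb13 A (\<phi> x))"
  "linear_fun \<phi> \<Longrightarrow> linear_fun (\<lambda>x. emb23 A (\<phi> x))"
  unfolding Rlift_def legs12_def legs23_def legs123_def emb13_def emb23_def
  by (simp_all add: linear_fun_lin_comp)

lemma linear_fun_actx [linear_fun_intros]: "linear_fun \<phi> \<Longrightarrow> linear_fun (\<lambda>x. actx B h (\<phi> x))"
  unfolding actx_def by (rule linear_fun_bilin_right)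

lemma X12_tens: "X12 A (tens x (tens y z)) = tens x (tens y (tens (hone A) z))"
  by (rule linear_fun_eqI3[where \<phi> = "\<lambda>x y z. X12 A (tens x (tens y z))"])
    ((rule linear_fun_intros)+ | simp add: X12_def tens_eq_lin lin_lin)+

lemma X13_tens: "X13 A (tens x (tens y z)) = tens x (tens (hone A) (tens y z))"
  by (rule linear_fun_eqI3[where \<phi> = "\<lambda>x y z. X13 A (tens x (tens y z))"])
    ((rule linear_fun_intros)+ | simp add: X13_def tens_eq_lin lin_lin)+

lemma X23_tens: "X23 A (tens x (tens y z)) = tens (hone A) (tens x (tens y z))"
  by (rule linear_fun_eqI3[where \<phi> = "\<lambda>x y z. X23 A (tens x (tens y z))"])
    ((rule linear_fun_intros)+ | simp add: X23_def tens_eq_lin lin_lin)+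

lemma flip21_tens: "flip21 (tens x (tens y z)) = tens y (tens x z)"
  by (rule linear_fun_eqI3[where \<phi> = "\<lambda>x y z. flip21 (tens x (tens y z))"])
    ((rule linear_fun_intros)+ | simp add: flip21_def tens_eq_lin lin_lin)+

lemma swap12_tens: "swap12 (tens x (tens y (tens z w))) = tens y (tens x (tens z w))"
  by (rule linear_fun_eqI4[where \<phi> = "\<lambda>x y z w. swap12 (tens x (tens y (tens z w)))"])
    ((rule linear_fun_intros)+ | simp add: swap12_def tens_eq_lin lin_lin)+

lemma swap23_tens: "swap23 (tens x (tens y (tens z w))) = tens x (tens z (tens y w))"
  by (rule linear_fun_eqI4[where \<phi> = "\<lambda>x y z w. swap23 (tens x (tens y (tens z w)))"])
    ((rule linear_fun_intros)+ | simp add: swap23_def tens_eq_lin lin_lin)+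

lemma sh3_tens: "sh3 B (tens x (tens y z)) = tens x (tens y (lin (lcoact B) z))"
  by (rule linear_fun_eqI3[where \<phi> = "\<lambda>x y z. sh3 B (tens x (tens y z))"])
    ((rule linear_fun_intros)+ | simp add: sh3_def tens_eq_lin lin_lin split_def)+

lemma DeltaL_tens: "DeltaL A (tens x (tens y z)) = legs12 y z (lin (hcomul A) x)"
  by (rule linear_fun_eqI3[where \<phi> = "\<lambda>x y z. DeltaL A (tens x (tens y z))"])
    ((rule linear_fun_intros)+ | simp add: DeltaL_def legs12_def split_def)+

lemma Rlift_tens: "Rlift B (tens x y) = tens x (tens y (lone B))"
  by (rule linear_fun_eqI2[where \<phi> = "\<lambda>x y. Rlift B (tens x y)"])
    ((rule linear_fun_intros)+ | simp add: Rlift_def tens_eq_lin lin_lin)+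

lemma emb13_tens: "emb13 A (tens x y) = tens x (tens (hone A) y)"
  by (rule linear_fun_eqI2[where \<phi> = "\<lambda>x y. emb13 A (tens x y)"])
    ((rule linear_fun_intros)+ | simp add: emb13_def tens_eq_lin lin_lin)+

lemma emb23_tens: "emb23 A (tens x y) = tens (hone A) (tens x y)"
  by (rule linear_fun_eqI2[where \<phi> = "\<lambda>x y. emb23 A (tens x y)"])
    ((rule linear_fun_intros)+ | simp add: emb23_def tens_eq_lin lin_lin)+

lemma legs12_tens: "legs12 y z (tens a b) = tens a (tens b (tens y z))"
  by (rule linear_fun_eqI2[where \<phi> = "\<lambda>a b. legs12 y z (tens a b)"])
    ((rule linear_fun_intros)+ | simp add: legs12_def)+

lemma legs23_tens: "legs23 x z (tens a b) = tens x (tens a (tens b z))"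
  by (rule linear_fun_eqI2[where \<phi> = "\<lambda>a b. legs23 x z (tens a b)"])
    ((rule linear_fun_intros)+ | simp add: legs23_def)+

lemma legs123_tens: "legs123 l (tens x (tens y z)) = tens x (tens y (tens z l))"
  by (rule linear_fun_eqI3[where \<phi> = "\<lambda>x y z. legs123 l (tens x (tens y z))"])
    ((rule linear_fun_intros)+ | simp add: legs123_def)+

lemma sh2_eq_swap23_sh3: "sh2 B X = swap23 (sh3 B X)"
  by (rule linear_fun_eqI[where \<phi> = "sh2 B"])
    ((rule linear_fun_intros)+ | simp add: sh2_def sh3_def swap23_def lin_lin split_def)+

lemma sh1_eq_swap12_swap23_sh3: "sh1 B X = swap12 (swap23 (sh3 B X))"
  by (rule linear_fun_eqI[where \<phi> = "sh1 B"])
    ((rule linear_fun_intros)+ | simp add: sh1_def sh3_def swap23_def swap12_def lin_lin split_def)+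

lemma flip21_flip21: "flip21 (flip21 x) = x"
  by (rule linear_fun_eqI[where \<phi> = "\<lambda>x. flip21 (flip21 x)"])
    ((rule linear_fun_intros)+ | simp add: flip21_def split_paired_all)+

lemma swap_braid: "swap23 (swap12 (swap23 x)) = swap12 (swap23 (swap12 x))"
  by (rule linear_fun_eqI[where \<phi> = "\<lambda>x. swap23 (swap12 (swap23 x))"])
    ((rule linear_fun_intros)+ | simp add: swap12_def swap23_def split_paired_all)+

lemma swap12_sh3: "swap12 (sh3 B x) = sh3 B (flip21 x)"
  by (rule linear_fun_eqI[where \<phi> = "\<lambda>x. swap12 (sh3 B x)"])
    ((rule linear_fun_intros)+ | simp add: swap12_def sh3_def flip21_def lin_lin split_def)+

lemma swap23_X23: "swap23 (X23 A x) = X23 A (flip21 x)"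
  by (rule linear_fun_eqI[where \<phi> = "\<lambda>x. swap23 (X23 A x)"])
    ((rule linear_fun_intros)+ | simp add: swap23_def X23_def flip21_def lin_lin split_def)+

lemma swap12_X23: "swap12 (X23 A x) = X13 A x"
  by (rule linear_fun_eqI[where \<phi> = "\<lambda>x. swap12 (X23 A x)"])
    ((rule linear_fun_intros)+ | simp add: swap12_def X23_def X13_def lin_lin split_def)+

lemma swap12_X13: "swap12 (X13 A x) = X23 A x"
  by (rule linear_fun_eqI[where \<phi> = "\<lambda>x. swap12 (X13 A x)"])
    ((rule linear_fun_intros)+ | simp add: swap12_def X23_def X13_def lin_lin split_def)+

lemma swap23_X13: "swap23 (X13 A x) = X12 A x"
  by (rule linear_fun_eqI[where \<phi> = "\<lambda>x. swap23 (X13 A x)"])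
    ((rule linear_fun_intros)+ | simp add: swap23_def X13_def X12_def lin_lin split_def)+

lemma swap23_X12: "swap23 (X12 A x) = X13 A x"
  by (rule linear_fun_eqI[where \<phi> = "\<lambda>x. swap23 (X12 A x)"])
    ((rule linear_fun_intros)+ | simp add: swap23_def X13_def X12_def lin_lin split_def)+

lemma swap12_legs12: "swap12 (legs12 y z v) = legs12 y z (lin (\<lambda>(p, q). bv (q, p)) v)"
  by (rule linear_fun_eqI[where \<phi> = "\<lambda>v. swap12 (legs12 y z v)"])
    ((rule linear_fun_intros)+ | simp add: legs12_def swap12_tens split_paired_all)+

lemma swap23_legs23: "swap23 (legs23 x z v) = legs23 x z (lin (\<lambda>(p, q). bv (q, p)) v)"
  by (rule linear_fun_eqI[where \<phi> = "\<lambda>v. swap23 (legs23 x z v)"])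
    ((rule linear_fun_intros)+ | simp add: legs23_def swap23_tens split_paired_all)+

lemma X12_Rlift: "X12 A (Rlift B v) = legs12 (hone A) (lone B) v"
proof (rule linear_fun_eqI[where \<phi> = "\<lambda>v. X12 A (Rlift B v)"])
  fix a
  show "X12 A (Rlift B (bv a)) = legs12 (hone A) (lone B) (bv a)"
    by (cases a) (simp only: bv_pair_tens Rlift_tens X12_tens legs12_tens)
qed (rule linear_fun_intros)+

lemma X23_Rlift: "X23 A (Rlift B v) = legs23 (hone A) (lone B) v"
proof (rule linear_fun_eqI[where \<phi> = "\<lambda>v. X23 A (Rlift B v)"])
  fix a
  show "X23 A (Rlift B (bv a)) = legs23 (hone A) (lone B) (bv a)"
    by (cases a) (simp only: bv_pair_tens Rlift_tens X23_tens legs23_tens)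
qed (rule linear_fun_intros)+

lemma DeltaL_bv: "DeltaL A (bv (a, b, l)) = legs12 (bv b) (bv l) (hcomul A a)"
  by (simp add: DeltaL_def legs12_def)

lemma DeltaR_bv: "DeltaR A (bv (a, b, l)) = legs23 (bv a) (bv l) (hcomul A b)"
  by (simp add: DeltaR_def legs23_def)

lemma legs123_eq_legs12: "legs123 z (lin (\<lambda>(p, q). bv (p, q, y)) w) = legs12 (bv y) z w"
proof (rule linear_fun_eqI[where \<phi> = "\<lambda>w. legs123 z (lin (\<lambda>(p, q). bv (p, q, y)) w)"])
  fix a
  show "legs123 z (lin (\<lambda>(p, q). bv (p, q, y)) (bv a)) = legs12 (bv y) z (bv a)"
    by (cases a) (hypsubst, simp only: lin_bv prod.case,
        simp only: bv_triple_tens bv_pair_tens legs123_tens legs12_tens)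
qed (rule linear_fun_intros)+

lemma legs123_comul_Rlift:
  "legs123 (lone B) (lin (\<lambda>(x, y). lin (\<lambda>(p, q). bv (p, q, y)) (hcomul A x)) v) = DeltaL A (Rlift B v)"
proof (rule linear_fun_eqI[where
    \<phi> = "\<lambda>v. legs123 (lone B) (lin (\<lambda>(x, y). lin (\<lambda>(p, q). bv (p, q, y)) (hcomul A x)) v)"])
  fix a
  show "legs123 (lone B) (lin (\<lambda>(x, y). lin (\<lambda>(p, q). bv (p, q, y)) (hcomul A x)) (bv a))
      = DeltaL A (Rlift B (bv a))"
    by (cases a) (hypsubst, simp only: lin_bv prod.case legs123_eq_legs12,
        simp only: bv_pair_tens Rlift_tens DeltaL_tens lin_bv)
qed (rule linear_fun_intros)+

lemma legs123_emb13: "legs123 (lone B) (emb13 A v) = X13 A (Rlift B v)"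
proof (rule linear_fun_eqI[where \<phi> = "\<lambda>v. legs123 (lone B) (emb13 A v)"])
  fix a
  show "legs123 (lone B) (emb13 A (bv a)) = X13 A (Rlift B (bv a))"
    by (cases a) (simp only: bv_pair_tens emb13_tens legs123_tens Rlift_tens X13_tens)
qed (rule linear_fun_intros)+

lemma legs123_emb23: "legs123 (lone B) (emb23 A v) = X23 A (Rlift B v)"
proof (rule linear_fun_eqI[where \<phi> = "\<lambda>v. legs123 (lone B) (emb23 A v)"])
  fix a
  show "legs123 (lone B) (emb23 A (bv a)) = X23 A (Rlift B (bv a))"
    by (cases a) (simp only: bv_pair_tens emb23_tens legs123_tens Rlift_tens X23_tens)
qed (rule linear_fun_intros)+


locale hopf_base =
  fixes A :: "('u, 'k::field) hopf_alg"
    and BH :: "'u set"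
    and B :: "('u, 'l, 'k) base_alg"
  assumes hopf: "hopf_algebra A"
    and subalgebra: "hopf_subalgebra A BH"
    and base: "base_algebra A BH B"
begin

abbreviation "U1 \<equiv> hone A"
abbreviation "L1 \<equiv> lone B"
abbreviation "one4 \<equiv> tens U1 (tens U1 (tens U1 L1))"
abbreviation multU (infixl "\<cdot>" 70) where "x \<cdot> y \<equiv> bilin (hmul A) x y"
abbreviation multL (infixl "\<bullet>" 70) where "x \<bullet> y \<equiv> bilin (lmul B) x y"
abbreviation mult2 (infixl "\<star>" 70) where "x \<star> y \<equiv> bilin (tmul (hmul A) (hmul A)) x y"
abbreviation mult3 (infixl "\<diamond>" 70) where "x \<diamond> y \<equiv> bilin (mul3 A B) x y"
abbreviation mult4 (infixl "\<odot>" 70) where "x \<odot> y \<equiv> bilin (mul4 A B) x y"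
abbreviation "comul x \<equiv> lin (hcomul A) x"
abbreviation "flip2 v \<equiv> lin (\<lambda>(x, y). bv (y, x)) v"

lemma algebra_U: "is_algebra (hmul A) U1"
  using hopf unfolding hopf_algebra_def by blast

lemma algebra_L: "is_algebra (lmul B) L1"
  using base unfolding base_algebra_def by blast

sublocale U: unital_algebra "hmul A" U1
  by unfold_locales (rule algebra_U)

sublocale L: unital_algebra "lmul B" L1
  by unfold_locales (rule algebra_L)

sublocale A3: unital_algebra "mul3 A B" "one3 A B"
  unfolding mul3_def one3_def by unfold_locales (intro is_algebra_tmul algebra_U algebra_L)

sublocale A4: unital_algebra "mul4 A B" one4
  unfolding mul4_def by unfold_locales (intro is_algebra_tmul algebra_U algebra_L)

lemma mult2_tens: "tens x1 x2 \<star> tens y1 y2 = tens (x1 \<cdot> y1) (x2 \<cdot> y2)"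
  by (simp add: bilin_tmul_tens)

lemma mult3_tens:
  "tens x1 (tens x2 x3) \<diamond> tens y1 (tens y2 y3) = tens (x1 \<cdot> y1) (tens (x2 \<cdot> y2) (x3 \<bullet> y3))"
  unfolding mul3_def by (simp add: bilin_tmul_tens)

lemma mult4_tens_coact:
  "tens x1 (tens x2 v) \<odot> tens y1 (tens y2 w)
     = tens (x1 \<cdot> y1) (tens (x2 \<cdot> y2) (bilin (tmul (hmul A) (lmul B)) v w))"
  unfolding mul4_def by (simp add: bilin_tmul_tens)

lemma mult4_tens:
  "tens x1 (tens x2 (tens x3 x4)) \<odot> tens y1 (tens y2 (tens y3 y4))
     = tens (x1 \<cdot> y1) (tens (x2 \<cdot> y2) (tens (x3 \<cdot> y3) (x4 \<bullet> y4)))"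
  unfolding mult4_tens_coact by (simp add: bilin_tmul_tens)

lemma X23_mult: "X23 A (x \<diamond> y) = X23 A x \<odot> X23 A y"
proof (rule linear_fun_eqI2[where \<phi> = "\<lambda>x y. X23 A (x \<diamond> y)"])
  fix a b :: "'u \<times> 'u \<times> 'l"
  show "X23 A (bv a \<diamond> bv b) = X23 A (bv a) \<odot> X23 A (bv b)"
    by (cases a, cases b) (simp only: bv_triple_tens mult3_tens mult4_tens X23_tens U.unit_left)
qed (rule linear_fun_intros)+

lemma flip21_mult: "flip21 (x \<diamond> y) = flip21 x \<diamond> flip21 y"
proof (rule linear_fun_eqI2[where \<phi> = "\<lambda>x y. flip21 (x \<diamond> y)"])
  fix a b :: "'u \<times> 'u \<times> 'l"
  show "flip21 (bv a \<diamond> bv b) = flip21 (bv a) \<diamond> flip21 (bv b)"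
    by (cases a, cases b) (simp only: bv_triple_tens mult3_tens flip21_tens)
qed (rule linear_fun_intros)+

lemma swap12_mult: "swap12 (x \<odot> y) = swap12 x \<odot> swap12 y"
proof (rule linear_fun_eqI2[where \<phi> = "\<lambda>x y. swap12 (x \<odot> y)"])
  fix a b :: "'u \<times> 'u \<times> 'u \<times> 'l"
  show "swap12 (bv a \<odot> bv b) = swap12 (bv a) \<odot> swap12 (bv b)"
    by (cases a, cases b) (simp only: bv_quadruple_tens mult4_tens swap12_tens)
qed (rule linear_fun_intros)+

lemma swap23_mult: "swap23 (x \<odot> y) = swap23 x \<odot> swap23 y"
proof (rule linear_fun_eqI2[where \<phi> = "\<lambda>x y. swap23 (x \<odot> y)"])
  fix a b :: "'u \<times> 'u \<times> 'u \<times> 'l"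
  show "swap23 (bv a \<odot> bv b) = swap23 (bv a) \<odot> swap23 (bv b)"
    by (cases a, cases b) (simp only: bv_quadruple_tens mult4_tens swap23_tens)
qed (rule linear_fun_intros)+

lemma coact_mult:
  "lin (lcoact B) (x \<bullet> y) = bilin (tmul (hmul A) (lmul B)) (lin (lcoact B) x) (lin (lcoact B) y)"
proof (rule linear_fun_eqI2[where \<phi> = "\<lambda>x y. lin (lcoact B) (x \<bullet> y)"])
  fix a b
  show "lin (lcoact B) (bv a \<bullet> bv b)
      = bilin (tmul (hmul A) (lmul B)) (lin (lcoact B) (bv a)) (lin (lcoact B) (bv b))"
    using base unfolding base_algebra_def by simp
qed (rule linear_fun_intros)+

lemma coact_one: "lin (lcoact B) L1 = tens U1 L1"
  using base unfolding base_algebra_def by simp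

lemma sh3_mult: "sh3 B (x \<diamond> y) = sh3 B x \<odot> sh3 B y"
proof (rule linear_fun_eqI2[where \<phi> = "\<lambda>x y. sh3 B (x \<diamond> y)"])
  fix a b :: "'u \<times> 'u \<times> 'l"
  show "sh3 B (bv a \<diamond> bv b) = sh3 B (bv a) \<odot> sh3 B (bv b)"
    by (cases a, cases b) (simp only: bv_triple_tens mult3_tens mult4_tens_coact sh3_tens coact_mult)
qed (rule linear_fun_intros)+

lemma comul_mult: "comul (x \<cdot> y) = comul x \<star> comul y"
proof (rule linear_fun_eqI2[where \<phi> = "\<lambda>x y. comul (x \<cdot> y)"])
  fix a b
  show "comul (bv a \<cdot> bv b) = comul (bv a) \<star> comul (bv b)"
    using hopf unfolding hopf_algebra_def by simp
qed (rule linear_fun_intros)+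

lemma comul_one: "comul U1 = tens U1 U1"
  using hopf unfolding hopf_algebra_def by simp

lemma legs12_mult: "legs12 y z v \<odot> legs12 y' z' v' = legs12 (y \<cdot> y') (z \<bullet> z') (v \<star> v')"
proof (rule linear_fun_eqI2[where \<phi> = "\<lambda>v v'. legs12 y z v \<odot> legs12 y' z' v'"])
  fix a b :: "'u \<times> 'u"
  show "legs12 y z (bv a) \<odot> legs12 y' z' (bv b) = legs12 (y \<cdot> y') (z \<bullet> z') (bv a \<star> bv b)"
    by (cases a, cases b) (simp only: bv_pair_tens legs12_tens mult4_tens mult2_tens)
qed (rule linear_fun_intros)+

lemma legs23_mult: "legs23 x z v \<odot> legs23 x' z' v' = legs23 (x \<cdot> x') (z \<bullet> z') (v \<star> v')"
proof (rule linear_fun_eqI2[where \<phi> = "\<lambda>v v'. legs23 x z v \<odot> legs23 x' z' v'"])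
  fix a b :: "'u \<times> 'u"
  show "legs23 x z (bv a) \<odot> legs23 x' z' (bv b) = legs23 (x \<cdot> x') (z \<bullet> z') (bv a \<star> bv b)"
    by (cases a, cases b) (simp only: bv_pair_tens legs23_tens mult4_tens mult2_tens)
qed (rule linear_fun_intros)+

lemma legs123_mult:
  "legs123 L1 (bilin (tmul (hmul A) (tmul (hmul A) (hmul A))) w w') = legs123 L1 w \<odot> legs123 L1 w'"
proof (rule linear_fun_eqI2[where
    \<phi> = "\<lambda>w w'. legs123 L1 (bilin (tmul (hmul A) (tmul (hmul A) (hmul A))) w w')"])
  fix a b :: "'u \<times> 'u \<times> 'u"
  show "legs123 L1 (bilin (tmul (hmul A) (tmul (hmul A) (hmul A))) (bv a) (bv b))
      = legs123 L1 (bv a) \<odot> legs123 L1 (bv b)"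
    by (cases a, cases b) (simp only: bv_triple_tens bilin_tmul_tens legs123_tens mult4_tens L.unit_left)
qed (rule linear_fun_intros)+

lemma DeltaL_mult: "DeltaL A (x \<diamond> y) = DeltaL A x \<odot> DeltaL A y"
proof (rule linear_fun_eqI2[where \<phi> = "\<lambda>x y. DeltaL A (x \<diamond> y)"])
  fix a b :: "'u \<times> 'u \<times> 'l"
  show "DeltaL A (bv a \<diamond> bv b) = DeltaL A (bv a) \<odot> DeltaL A (bv b)"
    by (cases a, cases b) (simp only: bv_triple_tens mult3_tens DeltaL_tens legs12_mult comul_mult)
qed (rule linear_fun_intros)+

lemma Rlift_mult: "Rlift B (v \<star> w) = Rlift B v \<diamond> Rlift B w"
proof (rule linear_fun_eqI2[where \<phi> = "\<lambda>v w. Rlift B (v \<star> w)"])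
  fix a b :: "'u \<times> 'u"
  show "Rlift B (bv a \<star> bv b) = Rlift B (bv a) \<diamond> Rlift B (bv b)"
    by (cases a, cases b) (simp only: bv_pair_tens mult2_tens Rlift_tens mult3_tens L.unit_left)
qed (rule linear_fun_intros)+

lemma flip21_one: "flip21 (one3 A B) = one3 A B"
  unfolding one3_def flip21_tens ..

lemma swap12_one: "swap12 one4 = one4"
  unfolding swap12_tens ..

lemma swap23_one: "swap23 one4 = one4"
  unfolding swap23_tens ..

lemma sh3_one: "sh3 B (one3 A B) = one4"
  unfolding one3_def sh3_tens coact_one ..

lemma DeltaL_one: "DeltaL A (one3 A B) = one4"
  unfolding one3_def DeltaL_tens comul_one legs12_tens ..

lemma invertible_flip21:
  "invertible_in (mul3 A B) (one3 A B) x \<Longrightarrow> invertible_in (mul3 A B) (one3 A B) (flip21 x)"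
  by (rule invertible_hom_image[OF A3.unital_algebra_axioms A3.unital_algebra_axioms
        flip21_mult flip21_one])

lemma invertible_DeltaL:
  "invertible_in (mul3 A B) (one3 A B) x \<Longrightarrow> invertible_in (mul4 A B) one4 (DeltaL A x)"
  by (rule invertible_hom_image[OF A3.unital_algebra_axioms A4.unital_algebra_axioms
        DeltaL_mult DeltaL_one])

lemma invertible_sh3:
  "invertible_in (mul3 A B) (one3 A B) x \<Longrightarrow> invertible_in (mul4 A B) one4 (sh3 B x)"
  by (rule invertible_hom_image[OF A3.unital_algebra_axioms A4.unital_algebra_axioms
        sh3_mult sh3_one])

lemma invertible_swap12:
  "invertible_in (mul4 A B) one4 x \<Longrightarrow> invertible_in (mul4 A B) one4 (swap12 x)"
  by (rule invertible_hom_image[OF A4.unital_algebra_axioms A4.unital_algebra_axioms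
        swap12_mult swap12_one])

lemma invertible_swap23:
  "invertible_in (mul4 A B) one4 x \<Longrightarrow> invertible_in (mul4 A B) one4 (swap23 x)"
  by (rule invertible_hom_image[OF A4.unital_algebra_axioms A4.unital_algebra_axioms
        swap23_mult swap23_one])

lemma sh3_Rlift: "sh3 B (Rlift B v) = X12 A (Rlift B v)"
proof (rule linear_fun_eqI[where \<phi> = "\<lambda>v. sh3 B (Rlift B v)"])
  fix a :: "'u \<times> 'u"
  show "sh3 B (Rlift B (bv a)) = X12 A (Rlift B (bv a))"
    by (cases a) (simp only: bv_pair_tens Rlift_tens sh3_tens X12_tens coact_one)
qed (rule linear_fun_intros)+

end


section \<open>Consequences of quasitriangularity\<close>

locale qt_hopf_base = hopf_base A BH B
  for A :: "('u, 'k::field) hopf_alg" and BH and B :: "('u, 'l, 'k) base_alg" +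
  fixes R :: "'u \<times> 'u \<Rightarrow>\<^sub>0 'k"
  assumes quasitriangular: "quasitriangular A R"
begin

abbreviation "R12 \<equiv> X12 A (Rlift B R)"
abbreviation "R13 \<equiv> X13 A (Rlift B R)"
abbreviation "R23 \<equiv> X23 A (Rlift B R)"

lemma R_comul: "R \<star> hcomul A a = flip2 (hcomul A a) \<star> R"
  using quasitriangular unfolding quasitriangular_def by blast

lemma R12_DeltaL: "R12 \<odot> DeltaL A X = swap12 (DeltaL A X) \<odot> R12"
proof (rule linear_fun_eqI[where \<phi> = "\<lambda>X. R12 \<odot> DeltaL A X"])
  fix a :: "'u \<times> 'u \<times> 'l"
  show "R12 \<odot> DeltaL A (bv a) = swap12 (DeltaL A (bv a)) \<odot> R12"
    by (cases a) (simp add: X12_Rlift DeltaL_bv swap12_legs12 legs12_mult R_comul)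
qed (rule linear_fun_intros)+

lemma R23_DeltaR: "R23 \<odot> DeltaR A X = swap23 (DeltaR A X) \<odot> R23"
proof (rule linear_fun_eqI[where \<phi> = "\<lambda>X. R23 \<odot> DeltaR A X"])
  fix a :: "'u \<times> 'u \<times> 'l"
  show "R23 \<odot> DeltaR A (bv a) = swap23 (DeltaR A (bv a)) \<odot> R23"
    by (cases a) (simp add: X23_Rlift DeltaR_bv swap23_legs23 legs23_mult R_comul)
qed (rule linear_fun_intros)+

lemma DeltaL_R: "DeltaL A (Rlift B R) = R13 \<odot> R23"
proof -
  have "lin (\<lambda>(x, y). lin (\<lambda>(p, q). bv (p, q, y)) (hcomul A x)) R
      = bilin (tmul (hmul A) (tmul (hmul A) (hmul A))) (emb13 A R) (emb23 A R)"
    using quasitriangular unfolding quasitriangular_def by blast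
  then have "legs123 L1 (lin (\<lambda>(x, y). lin (\<lambda>(p, q). bv (p, q, y)) (hcomul A x)) R)
      = legs123 L1 (emb13 A R) \<odot> legs123 L1 (emb23 A R)"
    by (simp add: legs123_mult)
  then show ?thesis
    by (simp only: legs123_comul_Rlift legs123_emb13 legs123_emb23)
qed

lemma quantum_YBE: "R12 \<odot> R13 \<odot> R23 = R23 \<odot> R13 \<odot> R12"
  using R12_DeltaL[of "Rlift B R"]
  by (simp add: DeltaL_R swap12_mult swap12_X13 swap12_X23 A4.assoc)

end


section \<open>The dynamical Yang-Baxter equation\<close>

locale twisted_qt_hopf_base = qt_hopf_base A BH B R
  for A :: "('u, 'k::field) hopf_alg" and BH and B :: "('u, 'l, 'k) base_alg" and R +
  fixes F :: "'u \<times> 'u \<times> 'l \<Rightarrow>\<^sub>0 'k"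
  assumes dyn_twist: "dyn_twist A BH B F"
begin

abbreviation "Rbar \<equiv> ainv (mul3 A B) (one3 A B) (flip21 F) \<diamond> Rlift B R \<diamond> F"

abbreviation "Phi \<equiv> DeltaL A F \<odot> sh3 B F"

lemma F_invertible: "invertible_in (mul3 A B) (one3 A B) F"
  using dyn_twist unfolding dyn_twist_def by blast

lemma Phi_eq_DeltaR: "Phi = DeltaR A F \<odot> X23 A F"
  using dyn_twist unfolding dyn_twist_def by blast

lemma flip21_F_invertible: "invertible_in (mul3 A B) (one3 A B) (flip21 F)"
  by (rule invertible_flip21[OF F_invertible])

lemma flip21_F_Rbar: "flip21 F \<diamond> Rbar = Rlift B R \<diamond> F"
  using A3.ainv(1)[OF flip21_F_invertible] by (simp add: A3.assoc[symmetric])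

lemma Phi_invertible: "invertible_in (mul4 A B) one4 Phi"
  by (intro A4.invertible_mult invertible_DeltaL invertible_sh3 F_invertible)

lemma R12_Phi: "R12 \<odot> Phi = swap12 Phi \<odot> sh3 B Rbar"
proof -
  have "R12 \<odot> Phi = (R12 \<odot> DeltaL A F) \<odot> sh3 B F"
    by (simp add: A4.assoc)
  also have "\<dots> = swap12 (DeltaL A F) \<odot> (sh3 B (Rlift B R) \<odot> sh3 B F)"
    by (simp add: R12_DeltaL A4.assoc sh3_Rlift)
  also have "\<dots> = swap12 (DeltaL A F) \<odot> sh3 B (flip21 F \<diamond> Rbar)"
    by (simp add: sh3_mult[symmetric] flip21_F_Rbar)
  also have "\<dots> = swap12 Phi \<odot> sh3 B Rbar"
    by (simp add: sh3_mult swap12_sh3 swap12_mult A4.assoc)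
  finally show ?thesis .
qed

lemma R23_Phi: "R23 \<odot> Phi = swap23 Phi \<odot> X23 A Rbar"
proof -
  have "R23 \<odot> Phi = (R23 \<odot> DeltaR A F) \<odot> X23 A F"
    by (simp add: Phi_eq_DeltaR A4.assoc)
  also have "\<dots> = swap23 (DeltaR A F) \<odot> (R23 \<odot> X23 A F)"
    by (simp add: R23_DeltaR A4.assoc)
  also have "\<dots> = swap23 (DeltaR A F) \<odot> X23 A (flip21 F \<diamond> Rbar)"
    by (simp add: X23_mult[symmetric] flip21_F_Rbar)
  also have "\<dots> = swap23 Phi \<odot> X23 A Rbar"
    by (simp add: Phi_eq_DeltaR X23_mult swap23_X23 swap23_mult A4.assoc)
  finally show ?thesis .
qed

lemma dynamical_YBE:
  "X12 A Rbar \<odot> sh2 B Rbar \<odot> X23 A Rbar = sh1 B Rbar \<odot> X13 A Rbar \<odot> sh3 B Rbar"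
proof -
  have R13_swap23_Phi: "R13 \<odot> swap23 Phi = swap23 (swap12 Phi) \<odot> sh2 B Rbar"
    using arg_cong[OF R12_Phi, of swap23]
    by (simp add: swap23_mult swap23_X12 sh2_eq_swap23_sh3)
  have R12_swap23_swap12_Phi:
    "R12 \<odot> swap23 (swap12 Phi) = swap23 (swap12 (swap23 Phi)) \<odot> X12 A Rbar"
    using arg_cong[OF R23_Phi, of "\<lambda>x. swap23 (swap12 x)"]
    by (simp add: swap23_mult swap12_mult swap12_X23 swap23_X13)
  have R13_swap12_Phi: "R13 \<odot> swap12 Phi = swap12 (swap23 Phi) \<odot> X13 A Rbar"
    using arg_cong[OF R23_Phi, of swap12]
    by (simp add: swap12_mult swap12_X23)
  have R23_swap12_swap23_Phi:
    "R23 \<odot> swap12 (swap23 Phi) = swap12 (swap23 (swap12 Phi)) \<odot> sh1 B Rbar"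
    using arg_cong[OF R12_Phi, of "\<lambda>x. swap12 (swap23 x)"]
    by (simp add: swap23_mult swap12_mult swap23_X12 swap12_X13 sh1_eq_swap12_swap23_sh3)
  have "R12 \<odot> R13 \<odot> R23 \<odot> Phi = R12 \<odot> ((R13 \<odot> swap23 Phi) \<odot> X23 A Rbar)"
    by (simp add: A4.assoc R23_Phi)
  also have "\<dots> = (R12 \<odot> swap23 (swap12 Phi)) \<odot> sh2 B Rbar \<odot> X23 A Rbar"
    by (simp add: R13_swap23_Phi A4.assoc)
  also have "\<dots> = swap23 (swap12 (swap23 Phi)) \<odot> (X12 A Rbar \<odot> sh2 B Rbar \<odot> X23 A Rbar)"
    by (simp add: R12_swap23_swap12_Phi A4.assoc)
  finally have left: "R12 \<odot> R13 \<odot> R23 \<odot> Phi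
      = swap23 (swap12 (swap23 Phi)) \<odot> (X12 A Rbar \<odot> sh2 B Rbar \<odot> X23 A Rbar)" .
  have "R23 \<odot> R13 \<odot> R12 \<odot> Phi = R23 \<odot> ((R13 \<odot> swap12 Phi) \<odot> sh3 B Rbar)"
    by (simp add: A4.assoc R12_Phi)
  also have "\<dots> = (R23 \<odot> swap12 (swap23 Phi)) \<odot> X13 A Rbar \<odot> sh3 B Rbar"
    by (simp add: R13_swap12_Phi A4.assoc)
  also have "\<dots> = swap12 (swap23 (swap12 Phi)) \<odot> (sh1 B Rbar \<odot> X13 A Rbar \<odot> sh3 B Rbar)"
    by (simp add: R23_swap12_swap23_Phi A4.assoc)
  finally have right: "R23 \<odot> R13 \<odot> R12 \<odot> Phi
      = swap23 (swap12 (swap23 Phi)) \<odot> (sh1 B Rbar \<odot> X13 A Rbar \<odot> sh3 B Rbar)"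
    by (simp add: swap_braid)
  have "invertible_in (mul4 A B) one4 (swap23 (swap12 (swap23 Phi)))"
    by (intro invertible_swap12 invertible_swap23 Phi_invertible)
  then show ?thesis
    by (rule A4.cancel_left) (use left right quantum_YBE in simp)
qed

end


section \<open>Invariance under the coproduct action of \<open>H\<close>\<close>

definition left_act3 :: "('u, 'k::field) hopf_alg \<Rightarrow> ('u, 'l, 'k) base_alg \<Rightarrow> 'u \<Rightarrow> 'u \<Rightarrow> 'u
    \<Rightarrow> ('u \<times> 'u \<times> 'l \<Rightarrow>\<^sub>0 'k) \<Rightarrow> ('u \<times> 'u \<times> 'l \<Rightarrow>\<^sub>0 'k)" where
  "left_act3 A B a b c Y = lin (\<lambda>(f1, f2, f3).
     tens (bilin (hmul A) (bv a) (bv f1)) (tens (bilin (hmul A) (bv b) (bv f2)) (actx B (bv c) (bv f3)))) Y"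

definition act_base3 :: "('u, 'l, 'k::field) base_alg \<Rightarrow> 'u
    \<Rightarrow> ('u \<times> 'u \<times> 'l \<Rightarrow>\<^sub>0 'k) \<Rightarrow> ('u \<times> 'u \<times> 'l \<Rightarrow>\<^sub>0 'k)" where
  "act_base3 B k Y = lin (\<lambda>(f1, f2, f3). tens (bv f1) (tens (bv f2) (actx B (bv k) (bv f3)))) Y"

text \<open>coprod_act A B h Y is h(1) Y_1 (x) h(2) Y_2 (x) h(3) |> Y_3 and coprod_act21 exchanges
  h(1) and h(2): these are the left-hand sides of the invariance conditions in dyn_twist and
  dyn_R_matrix.\<close>

definition coprod_act :: "('u, 'k::field) hopf_alg \<Rightarrow> ('u, 'l, 'k) base_alg \<Rightarrow> ('u \<Rightarrow>\<^sub>0 'k)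
    \<Rightarrow> ('u \<times> 'u \<times> 'l \<Rightarrow>\<^sub>0 'k) \<Rightarrow> ('u \<times> 'u \<times> 'l \<Rightarrow>\<^sub>0 'k)" where
  "coprod_act A B h Y = lin (\<lambda>(a, b, c). left_act3 A B a b c Y) (Delta2 A h)"

definition coprod_act21 :: "('u, 'k::field) hopf_alg \<Rightarrow> ('u, 'l, 'k) base_alg \<Rightarrow> ('u \<Rightarrow>\<^sub>0 'k)
    \<Rightarrow> ('u \<times> 'u \<times> 'l \<Rightarrow>\<^sub>0 'k) \<Rightarrow> ('u \<times> 'u \<times> 'l \<Rightarrow>\<^sub>0 'k)" where
  "coprod_act21 A B h Y = lin (\<lambda>(a, b, c). left_act3 A B b a c Y) (Delta2 A h)"

lemma linear_fun_left_act3 [linear_fun_intros]: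
  "linear_fun \<phi> \<Longrightarrow> linear_fun (\<lambda>x. left_act3 A B a b c (\<phi> x))"
  "linear_fun \<phi> \<Longrightarrow> linear_fun (\<lambda>x. act_base3 B k (\<phi> x))"
  unfolding left_act3_def act_base3_def by (simp_all add: linear_fun_lin_comp)

lemma left_act3_tens:
  "left_act3 A B a b c (tens x (tens y z))
     = tens (bilin (hmul A) (bv a) x) (tens (bilin (hmul A) (bv b) y) (actx B (bv c) z))"
  by (rule linear_fun_eqI3[where \<phi> = "\<lambda>x y z. left_act3 A B a b c (tens x (tens y z))"])
    ((rule linear_fun_intros)+ | simp add: left_act3_def)+

lemma act_base3_tens: "act_base3 B k (tens x (tens y z)) = tens x (tens y (actx B (bv k) z))"
  by (rule linear_fun_eqI3[where \<phi> = "\<lambda>x y z. act_base3 B k (tens x (tens y z))"])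
    ((rule linear_fun_intros)+ | simp add: act_base3_def)+

lemma flip21_left_act3: "flip21 (left_act3 A B a b c (flip21 Y)) = left_act3 A B b a c Y"
proof (rule linear_fun_eqI[where \<phi> = "\<lambda>Y. flip21 (left_act3 A B a b c (flip21 Y))"])
  fix e
  show "flip21 (left_act3 A B a b c (flip21 (bv e))) = left_act3 A B b a c (bv e)"
    by (cases e) (simp only: bv_triple_tens flip21_tens left_act3_tens)
qed (rule linear_fun_intros)+

lemma flip21_act_base3: "flip21 (act_base3 B k (flip21 Y)) = act_base3 B k Y"
proof (rule linear_fun_eqI[where \<phi> = "\<lambda>Y. flip21 (act_base3 B k (flip21 Y))"])
  fix e
  show "flip21 (act_base3 B k (flip21 (bv e))) = act_base3 B k (bv e)"
    by (cases e) (simp only: bv_triple_tens flip21_tens act_base3_tens)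
qed (rule linear_fun_intros)+

lemma flip21_lin: "flip21 (lin f v) = lin (\<lambda>a. flip21 (f a)) v"
  by (rule linear_fun_apply_lin) (rule linear_fun_intros)+

lemma coprod_act21_eq_flip21: "coprod_act21 A B h Y = flip21 (coprod_act A B h (flip21 Y))"
  unfolding coprod_act21_def coprod_act_def flip21_lin
  by (rule lin_cong) (simp add: split_def flip21_left_act3)

context hopf_base
begin

lemma actx_mult:
  "c \<in> BH \<Longrightarrow> actx B (bv c) (x \<bullet> y)
     = lin (\<lambda>p. actx B (bv (fst p)) x \<bullet> actx B (bv (snd p)) y) (hcomul A c)"
  using base unfolding base_algebra_def by (simp add: split_def)

lemma actx_one: "c \<in> BH \<Longrightarrow> actx B (bv c) L1 = smul (hcounit A c) L1"
  using base unfolding base_algebra_def by simp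

lemma keys_comul_subalgebra:
  "c \<in> BH \<Longrightarrow> p \<in> Poly_Mapping.keys (hcomul A c) \<Longrightarrow> fst p \<in> BH \<and> snd p \<in> BH"
  using subalgebra unfolding hopf_subalgebra_def by fastforce

lemma comul_counit_right: "lin (\<lambda>q. smul (hcounit A (snd q)) (bv (fst q))) (hcomul A r) = bv r"
  using hopf unfolding hopf_algebra_def by (simp add: split_def)

lemma comul_coassoc:
  "lin (\<lambda>p. lin (\<lambda>q. G (fst p) (fst q) (snd q)) (hcomul A (snd p))) (hcomul A x)
 = lin (\<lambda>p. lin (\<lambda>q. G (fst q) (snd q) (snd p)) (hcomul A (fst p))) (hcomul A x)"
proof -
  let ?g = "\<lambda>t. G (fst t) (fst (snd t)) (snd (snd t))"
  have "lin (\<lambda>(x, y). lin (\<lambda>(p, q). bv (p, q, y)) (hcomul A x)) (hcomul A x)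
      = lin (\<lambda>(x, y). lin (\<lambda>(p, q). bv (x, p, q)) (hcomul A y)) (hcomul A x)"
    using hopf unfolding hopf_algebra_def by blast
  then have "lin ?g (lin (\<lambda>(x, y). lin (\<lambda>(p, q). bv (x, p, q)) (hcomul A y)) (hcomul A x))
      = lin ?g (lin (\<lambda>(x, y). lin (\<lambda>(p, q). bv (p, q, y)) (hcomul A x)) (hcomul A x))"
    by simp
  then show ?thesis by (simp add: lin_lin split_def)
qed

lemma left_act3_mult:
  assumes "c \<in> BH"
  shows "left_act3 A B a b c (X \<diamond> Y)
    = lin (\<lambda>p. left_act3 A B a b (fst p) X \<diamond> act_base3 B (snd p) Y) (hcomul A c)"
proof (rule linear_fun_eqI2[where \<phi> = "\<lambda>X Y. left_act3 A B a b c (X \<diamond> Y)"])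
  fix f e :: "'u \<times> 'u \<times> 'l"
  obtain f1 f2 f3 e1 e2 e3 where fe: "f = (f1, f2, f3)" "e = (e1, e2, e3)"
    by (cases f, cases e) auto
  have "left_act3 A B a b c (bv f \<diamond> bv e)
      = tens (bv a \<cdot> (bv f1 \<cdot> bv e1)) (tens (bv b \<cdot> (bv f2 \<cdot> bv e2))
          (lin (\<lambda>p. actx B (bv (fst p)) (bv f3) \<bullet> actx B (bv (snd p)) (bv e3)) (hcomul A c)))"
    unfolding fe by (simp only: bv_triple_tens mult3_tens left_act3_tens actx_mult[OF assms])
  also have "\<dots> = lin (\<lambda>p. tens (bv a \<cdot> bv f1 \<cdot> bv e1) (tens (bv b \<cdot> bv f2 \<cdot> bv e2)
      (actx B (bv (fst p)) (bv f3) \<bullet> actx B (bv (snd p)) (bv e3)))) (hcomul A c)"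
    by (subst linear_fun_apply_lin[where \<phi> = "\<lambda>w. tens _ (tens _ w)"])
      ((rule linear_fun_intros)+, simp only: U.assoc)
  also have "\<dots> = lin (\<lambda>p. left_act3 A B a b (fst p) (bv f) \<diamond> act_base3 B (snd p) (bv e)) (hcomul A c)"
    unfolding fe by (simp only: bv_triple_tens mult3_tens left_act3_tens act_base3_tens)
  finally show "left_act3 A B a b c (bv f \<diamond> bv e)
      = lin (\<lambda>p. left_act3 A B a b (fst p) (bv f) \<diamond> act_base3 B (snd p) (bv e)) (hcomul A c)" .
qed (rule linear_fun_intros)+

lemma coprod_act_bv:
  "coprod_act A B (bv x) Z
     = lin (\<lambda>p. lin (\<lambda>q. left_act3 A B (fst p) (fst q) (snd q) Z) (hcomul A (snd p))) (hcomul A x)"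
  unfolding coprod_act_def Delta2_def by (simp add: lin_lin tens_eq_lin split_def)

lemma coprod_act_mult:
  assumes x: "x \<in> BH"
  shows "coprod_act A B (bv x) (X \<diamond> Y)
    = lin (\<lambda>p. coprod_act A B (bv (fst p)) X \<diamond> act_base3 B (snd p) Y) (hcomul A x)"
proof -
  have "coprod_act A B (bv x) (X \<diamond> Y) = lin (\<lambda>p. lin (\<lambda>q. lin (\<lambda>s.
        left_act3 A B (fst p) (fst q) (fst s) X \<diamond> act_base3 B (snd s) Y)
      (hcomul A (snd q))) (hcomul A (snd p))) (hcomul A x)"
    unfolding coprod_act_bv
  proof (intro lin_cong)
    fix p q
    assume "p \<in> Poly_Mapping.keys (hcomul A x)" "q \<in> Poly_Mapping.keys (hcomul A (snd p))"
    then have "snd q \<in> BH"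
      using keys_comul_subalgebra x by blast
    then show "left_act3 A B (fst p) (fst q) (snd q) (X \<diamond> Y)
        = lin (\<lambda>s. left_act3 A B (fst p) (fst q) (fst s) X \<diamond> act_base3 B (snd s) Y) (hcomul A (snd q))"
      by (rule left_act3_mult)
  qed
  also have "\<dots> = lin (\<lambda>p. lin (\<lambda>q. lin (\<lambda>s.
        left_act3 A B (fst p) (fst s) (snd s) X \<diamond> act_base3 B (snd q) Y)
      (hcomul A (fst q))) (hcomul A (snd p))) (hcomul A x)"
    by (intro lin_cong comul_coassoc[where G = "\<lambda>b c1 c2. left_act3 A B _ b c1 X \<diamond> act_base3 B c2 Y"])
  also have "\<dots> = lin (\<lambda>p. lin (\<lambda>q. lin (\<lambda>s.
        left_act3 A B (fst q) (fst s) (snd s) X \<diamond> act_base3 B (snd p) Y)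
      (hcomul A (snd q))) (hcomul A (fst p))) (hcomul A x)"
    by (rule comul_coassoc[where G = "\<lambda>a s c2. lin (\<lambda>s'. left_act3 A B a (fst s') (snd s') X
        \<diamond> act_base3 B c2 Y) (hcomul A s)"])
  also have "\<dots> = lin (\<lambda>p. coprod_act A B (bv (fst p)) X \<diamond> act_base3 B (snd p) Y) (hcomul A x)"
    unfolding coprod_act_bv by (simp add: bilin_lin_left)
  finally show ?thesis .
qed

lemma coprod_act21_mult:
  assumes "x \<in> BH"
  shows "coprod_act21 A B (bv x) (X \<diamond> Y)
    = lin (\<lambda>p. coprod_act21 A B (bv (fst p)) X \<diamond> act_base3 B (snd p) Y) (hcomul A x)"
proof -
  have "coprod_act21 A B (bv x) (X \<diamond> Y) = flip21 (coprod_act A B (bv x) (flip21 X \<diamond> flip21 Y))"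
    by (simp add: coprod_act21_eq_flip21 flip21_mult)
  also have "\<dots> = lin (\<lambda>p. flip21 (coprod_act A B (bv (fst p)) (flip21 X))
      \<diamond> flip21 (act_base3 B (snd p) (flip21 Y))) (hcomul A x)"
    by (simp add: coprod_act_mult[OF assms] flip21_lin flip21_mult)
  also have "\<dots> = lin (\<lambda>p. coprod_act21 A B (bv (fst p)) X \<diamond> act_base3 B (snd p) Y) (hcomul A x)"
    by (simp add: coprod_act21_eq_flip21 flip21_act_base3)
  finally show ?thesis .
qed

lemma Delta_one_bv: "Delta_one A B (bv g) = lin (\<lambda>q. tens (bv (fst q)) (tens (bv (snd q)) L1)) (hcomul A g)"
  unfolding Delta_one_def by (simp add: split_def)

lemma Delta_one_mult_act_base3: "tens (bv a) (tens (bv b) L1) \<diamond> act_base3 B k Y = left_act3 A B a b k Y"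
proof (rule linear_fun_eqI[where \<phi> = "\<lambda>Y. tens (bv a) (tens (bv b) L1) \<diamond> act_base3 B k Y"])
  fix e :: "'u \<times> 'u \<times> 'l"
  show "tens (bv a) (tens (bv b) L1) \<diamond> act_base3 B k (bv e) = left_act3 A B a b k (bv e)"
    by (cases e) (simp only: bv_triple_tens mult3_tens act_base3_tens left_act3_tens L.unit_left)
qed (rule linear_fun_intros)+

lemma coprod_act_eq_Delta_one:
  "lin (\<lambda>p. Delta_one A B (bv (fst p)) \<diamond> act_base3 B (snd p) Y) (hcomul A x) = coprod_act A B (bv x) Y"
proof -
  have "lin (\<lambda>p. Delta_one A B (bv (fst p)) \<diamond> act_base3 B (snd p) Y) (hcomul A x)
      = lin (\<lambda>p. lin (\<lambda>q. left_act3 A B (fst q) (snd q) (snd p) Y) (hcomul A (fst p))) (hcomul A x)"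
    by (simp add: Delta_one_bv bilin_lin_left Delta_one_mult_act_base3)
  also have "\<dots> = coprod_act A B (bv x) Y"
    unfolding coprod_act_bv by (rule comul_coassoc[symmetric])
  finally show ?thesis .
qed

lemma coprod_act21_eq_Delta_one:
  "lin (\<lambda>p. flip21 (Delta_one A B (bv (fst p))) \<diamond> act_base3 B (snd p) Y) (hcomul A x)
     = coprod_act21 A B (bv x) Y"
proof -
  have "lin (\<lambda>p. flip21 (Delta_one A B (bv (fst p))) \<diamond> act_base3 B (snd p) Y) (hcomul A x)
      = lin (\<lambda>p. flip21 (Delta_one A B (bv (fst p)) \<diamond> act_base3 B (snd p) (flip21 Y))) (hcomul A x)"
    by (simp add: flip21_mult flip21_act_base3)
  also have "\<dots> = coprod_act21 A B (bv x) Y"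
    by (simp add: flip21_lin[symmetric] coprod_act_eq_Delta_one coprod_act21_eq_flip21)
  finally show ?thesis .
qed

lemma coprod_act21_mult_invariant:
  assumes invariant: "\<And>g. g \<in> BH \<Longrightarrow> coprod_act21 A B (bv g) X = X \<diamond> E g" and x: "x \<in> BH"
  shows "coprod_act21 A B (bv x) (X \<diamond> Y)
    = X \<diamond> lin (\<lambda>p. E (fst p) \<diamond> act_base3 B (snd p) Y) (hcomul A x)"
proof -
  have "coprod_act21 A B (bv x) (X \<diamond> Y)
      = lin (\<lambda>p. X \<diamond> (E (fst p) \<diamond> act_base3 B (snd p) Y)) (hcomul A x)"
    unfolding coprod_act21_mult[OF x]
  proof (rule lin_cong)
    fix p
    assume "p \<in> Poly_Mapping.keys (hcomul A x)"
    then have "fst p \<in> BH" using keys_comul_subalgebra[OF x] by simp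
    then show "coprod_act21 A B (bv (fst p)) X \<diamond> act_base3 B (snd p) Y
        = X \<diamond> (E (fst p) \<diamond> act_base3 B (snd p) Y)"
      by (simp add: invariant A3.assoc)
  qed
  then show ?thesis by (simp add: bilin_lin_right)
qed

end

lemma Delta_one_bv_Rlift: "Delta_one A B (bv g) = Rlift B (hcomul A g)"
  unfolding Delta_one_def Rlift_def by (simp add: split_def tens_eq_lin lin_lin)

context hopf_base
begin

lemma coprod_act21_bv:
  "coprod_act21 A B (bv x) Z
     = lin (\<lambda>p. lin (\<lambda>q. left_act3 A B (fst q) (fst p) (snd q) Z) (hcomul A (snd p))) (hcomul A x)"
  unfolding coprod_act21_def Delta2_def by (simp add: lin_lin tens_eq_lin split_def)

lemma left_act3_Rlift:
  assumes "c \<in> BH"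
  shows "left_act3 A B a b c (Rlift B v) = smul (hcounit A c) (Rlift B (tens (bv a) (bv b) \<star> v))"
proof (rule linear_fun_eqI[where \<phi> = "\<lambda>v. left_act3 A B a b c (Rlift B v)"])
  have tens_smul: "tens x (tens y (smul d z)) = smul d (tens x (tens y z))" for x y z and d :: 'k
    by (rule linear_fun_smul) (rule linear_fun_intros)+
  fix e :: "'u \<times> 'u"
  show "left_act3 A B a b c (Rlift B (bv e)) = smul (hcounit A c) (Rlift B (tens (bv a) (bv b) \<star> bv e))"
    by (cases e) (simp only: bv_pair_tens Rlift_tens left_act3_tens actx_one[OF assms] mult2_tens tens_smul)
qed (rule linear_fun_intros)+

lemma comul_counit_tens: "lin (\<lambda>q. smul (hcounit A (snd q)) (tens (bv (fst q)) w)) (hcomul A r) = tens (bv r) w"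
proof -
  have "lin (\<lambda>q. smul (hcounit A (snd q)) (tens (bv (fst q)) w)) (hcomul A r)
      = lin (\<lambda>q. tens (smul (hcounit A (snd q)) (bv (fst q))) w) (hcomul A r)"
    by (intro lin_cong linear_fun_smul[symmetric]) (rule linear_fun_intros)+
  also have "\<dots> = tens (lin (\<lambda>q. smul (hcounit A (snd q)) (bv (fst q))) (hcomul A r)) w"
    by (rule linear_fun_apply_lin[where \<phi> = "\<lambda>x. tens x w", symmetric]) (rule linear_fun_intros)+
  finally show ?thesis by (simp only: comul_counit_right)
qed

lemma coprod_act21_Rlift:
  assumes g: "g \<in> BH"
  shows "coprod_act21 A B (bv g) (Rlift B v) = Rlift B (flip2 (hcomul A g) \<star> v)"
proof -
  have Rlift_mult_linear: "linear_fun (\<lambda>w. Rlift B (w \<star> v))"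
    by (rule linear_fun_intros)+
  have "coprod_act21 A B (bv g) (Rlift B v) = lin (\<lambda>p. lin (\<lambda>q.
      smul (hcounit A (snd q)) (Rlift B (tens (bv (fst q)) (bv (fst p)) \<star> v))) (hcomul A (snd p))) (hcomul A g)"
    unfolding coprod_act21_bv
  proof (intro lin_cong)
    fix p q
    assume "p \<in> Poly_Mapping.keys (hcomul A g)" "q \<in> Poly_Mapping.keys (hcomul A (snd p))"
    then have "snd q \<in> BH"
      using keys_comul_subalgebra g by blast
    then show "left_act3 A B (fst q) (fst p) (snd q) (Rlift B v)
        = smul (hcounit A (snd q)) (Rlift B (tens (bv (fst q)) (bv (fst p)) \<star> v))"
      by (rule left_act3_Rlift)
  qed
  also have "\<dots> = Rlift B (lin (\<lambda>p. lin (\<lambda>q.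
      smul (hcounit A (snd q)) (tens (bv (fst q)) (bv (fst p)))) (hcomul A (snd p))) (hcomul A g) \<star> v)"
    by (simp add: linear_fun_apply_lin[OF Rlift_mult_linear] linear_fun_smul[OF Rlift_mult_linear])
  also have "\<dots> = Rlift B (flip2 (hcomul A g) \<star> v)"
    by (simp only: comul_counit_tens) (simp add: split_def)
  finally show ?thesis .
qed

end

context qt_hopf_base
begin

lemma coprod_act21_R:
  "g \<in> BH \<Longrightarrow> coprod_act21 A B (bv g) (Rlift B R) = Rlift B R \<diamond> Delta_one A B (bv g)"
  by (simp add: coprod_act21_Rlift R_comul[symmetric] Rlift_mult Delta_one_bv_Rlift)

end

context twisted_qt_hopf_base
begin

lemma coprod_act_F: "g \<in> BH \<Longrightarrow> coprod_act A B (bv g) F = F \<diamond> Delta_one A B (bv g)"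
  using dyn_twist unfolding dyn_twist_def coprod_act_def left_act3_def subsp_def by simp

lemma coprod_act21_flip21_F:
  "g \<in> BH \<Longrightarrow> coprod_act21 A B (bv g) (flip21 F) = flip21 F \<diamond> flip21 (Delta_one A B (bv g))"
  by (simp add: coprod_act21_eq_flip21 flip21_flip21 coprod_act_F flip21_mult)

lemma coprod_act21_Rbar_bv:
  assumes x: "x \<in> BH"
  shows "coprod_act21 A B (bv x) Rbar = Rbar \<diamond> Delta_one A B (bv x)"
proof (rule A3.cancel_left[OF flip21_F_invertible])
  have "flip21 F \<diamond> coprod_act21 A B (bv x) Rbar = coprod_act21 A B (bv x) (flip21 F \<diamond> Rbar)"
    using coprod_act21_mult_invariant[OF coprod_act21_flip21_F x] coprod_act21_eq_Delta_one by simp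
  also have "\<dots> = coprod_act21 A B (bv x) (Rlift B R \<diamond> F)"
    by (simp only: flip21_F_Rbar)
  also have "\<dots> = Rlift B R \<diamond> (F \<diamond> Delta_one A B (bv x))"
    using coprod_act21_mult_invariant[OF coprod_act21_R x] coprod_act_eq_Delta_one coprod_act_F[OF x]
    by simp
  also have "\<dots> = (flip21 F \<diamond> Rbar) \<diamond> Delta_one A B (bv x)"
    by (simp only: A3.assoc[symmetric, of "Rlift B R"] flip21_F_Rbar)
  also have "\<dots> = flip21 F \<diamond> (Rbar \<diamond> Delta_one A B (bv x))"
    by (rule A3.assoc)
  finally show "flip21 F \<diamond> coprod_act21 A B (bv x) Rbar
      = flip21 F \<diamond> (Rbar \<diamond> Delta_one A B (bv x))" .
qed

lemma coprod_act21_Rbar: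
  assumes h: "h \<in> subsp BH"
  shows "coprod_act21 A B h Rbar = Rbar \<diamond> Delta_one A B h"
proof -
  have coprod_act21_linear: "linear_fun (\<lambda>h. coprod_act21 A B h Rbar)"
    unfolding coprod_act21_def Delta2_def by (rule linear_fun_intros)+
  have Delta_one_linear: "linear_fun (\<lambda>h. Rbar \<diamond> Delta_one A B h)"
    unfolding Delta_one_def by (rule linear_fun_intros)+
  have "coprod_act21 A B h Rbar = lin (\<lambda>x. coprod_act21 A B (bv x) Rbar) h"
    by (rule linear_fun_eq_lin[OF coprod_act21_linear])
  also have "\<dots> = lin (\<lambda>x. Rbar \<diamond> Delta_one A B (bv x)) h"
    using h by (intro lin_cong coprod_act21_Rbar_bv) (auto simp: subsp_def)
  also have "\<dots> = Rbar \<diamond> Delta_one A B h"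
    by (rule linear_fun_eq_lin[OF Delta_one_linear, symmetric])
  finally show ?thesis .
qed

lemma Rbar_dyn_R_matrix: "dyn_R_matrix A BH B Rbar"
  using coprod_act21_Rbar dynamical_YBE
  unfolding dyn_R_matrix_def coprod_act21_def left_act3_def by blast

end

theorem proposition5p16:
  fixes A :: "('u, 'k::field_char_0) hopf_alg"
    and R :: "'u \<times> 'u \<Rightarrow>\<^sub>0 'k"
    and BH :: "'u set"
    and B :: "('u, 'l, 'k) base_alg"
    and F :: "'u \<times> 'u \<times> 'l \<Rightarrow>\<^sub>0 'k"
  assumes "quasitriangular A R"
    and "hopf_subalgebra A BH"
    and "base_algebra A BH B"
    and "dyn_twist A BH B F"
  shows "dyn_R_matrix A BH B
           (bilin (mul3 A B) (bilin (mul3 A B) (ainv (mul3 A B) (one3 A B) (flip21 F)) (Rlift B R)) F)"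
proof -
  have "hopf_algebra A"
    using assms(1) unfolding quasitriangular_def by blast
  then interpret twisted_qt_hopf_base A BH B R F
    using assms by unfold_locales
  show ?thesis
    by (rule Rbar_dyn_R_matrix)
qed

end
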